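(* Let $N\ge2$, $n,m,p$ be positive integers, $A\in\mathbb{R}^{n\times n}$, $B\in\mathbb{R}^{n\times p}$, $C\in\mathbb{R}^{m\times n}$, $H\in\mathbb{R}^{n\times m}$, and $h>0$. Let $W=W_{circle}\in\mathbb{R}^{N\times N}$ have entries $w_{1,N}\neq0$, $w_{i,i-1}\neq0$ for $i=2,\dots,N$, and all other entries zero, and let $\Delta=\Delta_1=\mathrm{diag}(1,0,\dots,0)\in\mathbb{R}^{N\times N}$. Put $\mathcal{B}(h)=\int_0^h e^{A\tau}d\tau\,B$, $\mathcal{H}(h)=\int_0^h e^{A\tau}d\tau\,HC$, $\Phi_s=I_N\otimes e^{Ah}+W\otimes\mathcal{H}(h)$, $\Psi_s=\Delta\otimes\mathcal{B}(h)$. Let $v_1,\dots,v_N\in\mathbb{C}^{1\times N}$ be linearly independent row vectors with $v_kW=\lambda_kv_k$ ($\lambda_1,\dots,\lambda_N$ the eigenvalues of $W$), and $E_k=e^{Ah}+\lambda_k\mathcal{H}(h)$. Suppose: (2) the pair $(E_k,\mathcal{B}(h))$ is controllable for every $k=1,\dots,N$; (3) whenever $\theta\in\mathbb{C}$ is a common eigenvalue of $E_{k_1},\dots,E_{k_q}$ for distinct indices $k_1,\dots,k_q$ with $1<q\le N$, then $(v_{k_1}\otimes\xi_{k_1}+\dots+v_{k_q}\otimes\xi_{k_q})(\Delta\otimes\mathcal{B}(h))\neq0$ for all $\xi_j\in M(\theta\,|\,E_j)$, $j=k_1,\dots,k_q$, with $(\xi_{k_1},\dots,\xi_{k_q})\neq0$.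 Then the networked sampled-data system $X(k+1)=\Phi_sX(k)+\Psi_sU(k)$ is controllable.
   Context: The networked sampled-data system is the discrete-time system $X(k+1)=\Phi_sX(k)+\Psi_sU(k)$; it is called controllable if every initial state can be steered to the origin in finitely many steps. For $F\in\mathbb{C}^{q\times q}$, $G\in\mathbb{C}^{q\times s}$, the pair $(F,G)$ is called controllable if $\mathrm{rank}[sI_q-F,\ G]=q$ for every $s\in\mathbb{C}$. $M(\theta\,|\,E)=\{\xi:\ \xi E=\theta\xi\}$ is the left eigenspace of the square matrix $E$ for $\theta$. $\otimes$ is the Kronecker product. *)

theory Defs
  imports "HOL-Analysis.Analysis" "Jordan_Normal_Form.DL_Rank" "Jordan_Normal_Form.Char_Poly"
begin

definition mexp :: "real mat \<Rightarrow> real \<Rightarrow> real mat" where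
  "mexp A t = mat (dim_row A) (dim_col A)
      (\<lambda>(i,j). \<Sum>k. (t ^ k / fact k) * (A ^\<^sub>m k) $$ (i,j))"

definition mexp_int :: "real mat \<Rightarrow> real \<Rightarrow> real mat" where
  "mexp_int A h = mat (dim_row A) (dim_col A)
      (\<lambda>(i,j). integral {0..h} (\<lambda>\<tau>. mexp A \<tau> $$ (i,j)))"

definition kron :: "'a::times mat \<Rightarrow> 'a mat \<Rightarrow> 'a mat" where
  "kron P Q = mat (dim_row P * dim_row Q) (dim_col P * dim_col Q)
      (\<lambda>(i,j). P $$ (i div dim_row Q, j div dim_col Q) * Q $$ (i mod dim_row Q, j mod dim_col Q))"

definition cpx :: "real mat \<Rightarrow> complex mat" where
  "cpx M = map_mat complex_of_real M"

definition controllable_pair :: "complex mat \<Rightarrow> complex mat \<Rightarrow> bool" where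
  "controllable_pair F G \<longleftrightarrow>
     (\<forall>s::complex. vec_space.rank (dim_row F)
        (mat (dim_row F) (dim_row F + dim_col G)
           (\<lambda>(i,j). if j < dim_row F then (s \<cdot>\<^sub>m 1\<^sub>m (dim_row F) - F) $$ (i,j)
                    else G $$ (i, j - dim_row F))) = dim_row F)"

definition left_eigenspace :: "complex \<Rightarrow> complex mat \<Rightarrow> complex mat set" where
  "left_eigenspace \<theta> E = {\<xi> \<in> carrier_mat 1 (dim_row E). \<xi> * E = \<theta> \<cdot>\<^sub>m \<xi>}"

fun traj :: "real mat \<Rightarrow> real mat \<Rightarrow> real vec \<Rightarrow> (nat \<Rightarrow> real vec) \<Rightarrow> nat \<Rightarrow> real vec" where
  "traj Phi Psi X0 U 0 = X0"
| "traj Phi Psi X0 U (Suc k) = Phi *\<^sub>v traj Phi Psi X0 U k + Psi *\<^sub>v U k"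

definition dt_controllable :: "real mat \<Rightarrow> real mat \<Rightarrow> bool" where
  "dt_controllable Phi Psi \<longleftrightarrow>
     (\<forall>X0 \<in> carrier_vec (dim_row Phi). \<exists>U K.
        (\<forall>k. U k \<in> carrier_vec (dim_col Psi)) \<and> traj Phi Psi X0 U K = 0\<^sub>v (dim_row Phi))"

end

theory Submission
  imports Defs "Jordan_Normal_Form.Schur_Decomposition"
begin

text \<open>
  By the Popov-Belevitch-Hautus test it suffices that no nonzero left eigenvector \<open>\<eta>\<close> of
  \<open>\<Phi>\<^sub>s\<close> satisfies \<open>\<eta> \<Psi>\<^sub>s = 0\<close>. (The left kernel of the controllability matrix
  \<open>[\<Psi>\<^sub>s, \<Phi>\<^sub>s \<Psi>\<^sub>s, \<dots>]\<close> eventually becomes \<open>\<Phi>\<^sub>s\<close>-invariant, so by Schur triangularisation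
  it would otherwise contain such an \<open>\<eta>\<close>; hence the Kalman rank condition holds, the
  controllability Gramian is invertible, and a steering input can be read off from it.) Since the left eigenvectors \<open>v\<^sub>k\<close> of \<open>W\<close> form a basis, every left eigenvector of
  \<open>\<Phi>\<^sub>s = I \<otimes> e\<^sup>A\<^sup>h + W \<otimes> \<H>(h)\<close> for \<open>\<theta>\<close> is \<open>\<eta> = \<Sum>\<^sub>k v\<^sub>k \<otimes> \<xi>\<^sub>k\<close> with
  \<open>\<xi>\<^sub>k E\<^sub>k = \<theta> \<xi>\<^sub>k\<close>. If a single \<open>\<xi>\<^sub>k\<close> is nonzero, \<open>\<eta> \<Psi>\<^sub>s = 0\<close> reduces to
  \<open>v\<^sub>k(1) \<xi>\<^sub>k \<B>(h) = 0\<close>; on a weighted cycle every left eigenvector has \<open>v\<^sub>k(1) \<noteq> 0\<close>,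
  so this contradicts controllability of \<open>(E\<^sub>k, \<B>(h))\<close>. If several are nonzero, they share the
  eigenvalue \<open>\<theta>\<close> and hypothesis (3) applies.
\<close>

lemma index_mult_mat_sum:
  assumes "A \<in> carrier_mat m n" "B \<in> carrier_mat n p" "i < m" "j < p"
  shows "(A * B) $$ (i,j) = (\<Sum>k<n. A $$ (i,k) * B $$ (k,j))"
  using assms by (auto simp: scalar_prod_def lessThan_atLeast0 intro!: sum.cong)

lemma index_mult_mat_vec_sum:
  assumes "A \<in> carrier_mat m n" "x \<in> carrier_vec n" "i < m"
  shows "(A *\<^sub>v x) $ i = (\<Sum>k<n. A $$ (i,k) * x $ k)"
  using assms by (auto simp: scalar_prod_def lessThan_atLeast0 intro!: sum.cong)

lemma pow_mat_Suc_left: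
  assumes A: "A \<in> carrier_mat n n"
  shows "A ^\<^sub>m Suc k = A * A ^\<^sub>m k"
proof (induction k)
  case 0
  show ?case using A by simp
next
  case (Suc k)
  have "A ^\<^sub>m Suc (Suc k) = (A * A ^\<^sub>m k) * A" using Suc by simp
  also have "\<dots> = A * A ^\<^sub>m Suc k" using A by (simp add: assoc_mult_mat[of _ n n _ n _ n])
  finally show ?case .
qed

lemma det_nonzero_imp_right_inverse:
  fixes A :: "'a::field mat"
  assumes A: "A \<in> carrier_mat n n" and det: "det A \<noteq> 0"
  obtains B where "B \<in> carrier_mat n n" "A * B = 1\<^sub>m n"
  using det_non_zero_imp_unit[OF A det] that unfolding Units_def by (auto simp: ring_mat_def)

lemma det_nonzero_imp_solvable:
  fixes A :: "'a::field mat"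
  assumes A: "A \<in> carrier_mat n n" and det: "det A \<noteq> 0" and x: "x \<in> carrier_vec n"
  obtains y where "y \<in> carrier_vec n" "A *\<^sub>v y = x"
proof -
  obtain B where B: "B \<in> carrier_mat n n" "A * B = 1\<^sub>m n"
    using det_nonzero_imp_right_inverse[OF A det] .
  have "A *\<^sub>v (B *\<^sub>v x) = x" using B x A by (simp flip: assoc_mult_mat_vec)
  with B x show ?thesis by (intro that[of "B *\<^sub>v x"]) auto
qed

lemma scalar_prod_self_eq_0_iff:
  fixes x :: "'a::linordered_idom vec"
  assumes "x \<in> carrier_vec n"
  shows "x \<bullet> x = 0 \<longleftrightarrow> x = 0\<^sub>v n"
  using assms by (auto simp: scalar_prod_def sum_nonneg_eq_0_iff intro!: eq_vecI)

lemma scalar_prod_self_nonneg: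
  fixes x :: "'a::linordered_idom vec"
  shows "0 \<le> x \<bullet> x"
  by (auto simp: scalar_prod_def intro!: sum_nonneg)

section \<open>The controllability Gramian\<close>

text \<open>In closed form, \<open>ctrb_gramian \<Phi> \<Psi> k = (\<Sum>j<k. \<Phi>\<^sup>j \<Psi> (\<Phi>\<^sup>j \<Psi>)\<^sup>T)\<close>.\<close>
fun ctrb_gramian :: "'a::comm_semiring_1 mat \<Rightarrow> 'a mat \<Rightarrow> nat \<Rightarrow> 'a mat" where
  "ctrb_gramian Phi Psi 0 = 0\<^sub>m (dim_row Phi) (dim_row Phi)"
| "ctrb_gramian Phi Psi (Suc k) =
     Phi * ctrb_gramian Phi Psi k * transpose_mat Phi + Psi * transpose_mat Psi"

lemma ctrb_gramian_carrier:
  assumes "Phi \<in> carrier_mat n n" "Psi \<in> carrier_mat n p"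
  shows "ctrb_gramian Phi Psi k \<in> carrier_mat n n"
  using assms by (induction k) auto

lemma ctrb_gramian_Suc_quadratic_form:
  fixes Phi Psi :: "'a::comm_ring_1 mat"
  assumes Phi: "Phi \<in> carrier_mat n n" and Psi: "Psi \<in> carrier_mat n p" and y: "y \<in> carrier_vec n"
  shows "y \<bullet> (ctrb_gramian Phi Psi (Suc k) *\<^sub>v y)
    = (transpose_mat Phi *\<^sub>v y) \<bullet> (ctrb_gramian Phi Psi k *\<^sub>v (transpose_mat Phi *\<^sub>v y))
      + (transpose_mat Psi *\<^sub>v y) \<bullet> (transpose_mat Psi *\<^sub>v y)"
proof -
  define G where "G = ctrb_gramian Phi Psi k"
  have G: "G \<in> carrier_mat n n" unfolding G_def using ctrb_gramian_carrier[OF Phi Psi] .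
  have "ctrb_gramian Phi Psi (Suc k) *\<^sub>v y
      = Phi *\<^sub>v (G *\<^sub>v (transpose_mat Phi *\<^sub>v y)) + Psi *\<^sub>v (transpose_mat Psi *\<^sub>v y)"
    using Phi Psi G y
    by (simp add: G_def add_mult_distrib_mat_vec[of _ n n] assoc_mult_mat_vec[of _ n n _ n])
  then show ?thesis
    using Phi Psi G y unfolding G_def[symmetric]
    by (simp add: scalar_prod_add_distrib[of _ n] transpose_vec_mult_scalar[of _ n n]
        transpose_vec_mult_scalar[of _ n p])
qed

lemma transpose_pow_mult_Suc_mult_vec:
  fixes Phi Psi :: "'a::comm_semiring_1 mat"
  assumes Phi: "Phi \<in> carrier_mat n n" and Psi: "Psi \<in> carrier_mat n p" and y: "y \<in> carrier_vec n"
  shows "transpose_mat (Phi ^\<^sub>m Suc i * Psi) *\<^sub>v y = transpose_mat (Phi ^\<^sub>m i * Psi) *\<^sub>v (transpose_mat Phi *\<^sub>v y)"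
proof -
  have M: "Phi ^\<^sub>m i * Psi \<in> carrier_mat n p" using mult_carrier_mat[OF pow_carrier_mat[OF Phi] Psi] .
  have "Phi ^\<^sub>m Suc i * Psi = Phi * (Phi ^\<^sub>m i * Psi)"
    unfolding pow_mat_Suc_left[OF Phi] using Phi Psi by (meson assoc_mult_mat pow_carrier_mat)
  then have "transpose_mat (Phi ^\<^sub>m Suc i * Psi) = transpose_mat (Phi ^\<^sub>m i * Psi) * transpose_mat Phi"
    using transpose_mult[OF Phi M] by simp
  moreover have "transpose_mat (Phi ^\<^sub>m i * Psi) \<in> carrier_mat p n" using M by simp
  ultimately show ?thesis using Phi y by simp
qed

text \<open>The quadratic form of the Gramian is \<open>\<Sum>j<k. \<parallel>(\<Phi>\<^sup>j \<Psi>)\<^sup>T y\<parallel>\<^sup>2\<close>.\<close>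
lemma ctrb_gramian_quadratic_form:
  fixes Phi Psi :: "'a::linordered_idom mat"
  assumes Phi: "Phi \<in> carrier_mat n n" and Psi: "Psi \<in> carrier_mat n p"
    and y: "y \<in> carrier_vec n"
  shows "0 \<le> y \<bullet> (ctrb_gramian Phi Psi k *\<^sub>v y)
    \<and> (y \<bullet> (ctrb_gramian Phi Psi k *\<^sub>v y) = 0 \<longrightarrow>
         (\<forall>j<k. transpose_mat (Phi ^\<^sub>m j * Psi) *\<^sub>v y = 0\<^sub>v p))"
  using y
proof (induction k arbitrary: y)
  case 0
  then show ?case using Phi by (simp add: mult_mat_vec_def scalar_prod_def)
next
  case (Suc k)
  define z where "z = transpose_mat Phi *\<^sub>v y"
  have z: "z \<in> carrier_vec n" unfolding z_def using Phi Suc.prems by simp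
  have Psi_y: "transpose_mat Psi *\<^sub>v y \<in> carrier_vec p" using Psi Suc.prems by simp
  note split = ctrb_gramian_Suc_quadratic_form[OF Phi Psi Suc.prems, of k, folded z_def]
  note IH = Suc.IH[OF z]
  have "transpose_mat (Phi ^\<^sub>m j * Psi) *\<^sub>v y = 0\<^sub>v p"
    if zero: "y \<bullet> (ctrb_gramian Phi Psi (Suc k) *\<^sub>v y) = 0" and j: "j < Suc k" for j
  proof -
    have "z \<bullet> (ctrb_gramian Phi Psi k *\<^sub>v z) = 0" and Psi_y_zero: "transpose_mat Psi *\<^sub>v y = 0\<^sub>v p"
      using zero IH scalar_prod_self_nonneg[of "transpose_mat Psi *\<^sub>v y"]
        scalar_prod_self_eq_0_iff[OF Psi_y] unfolding split by auto
    then show ?thesis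
      using IH j Phi Psi Psi_y_zero transpose_pow_mult_Suc_mult_vec[OF Phi Psi Suc.prems]
      by (cases j) (auto simp: z_def)
  qed
  then show ?case
    using IH scalar_prod_self_nonneg[of "transpose_mat Psi *\<^sub>v y"] unfolding split by auto
qed

lemma traj_gramian_input:
  assumes Phi: "Phi \<in> carrier_mat n n" and Psi: "Psi \<in> carrier_mat n p"
    and X0: "X0 \<in> carrier_vec n" and z: "z \<in> carrier_vec n" and k: "k \<le> K"
  shows "traj Phi Psi X0 (\<lambda>i. transpose_mat Psi *\<^sub>v (transpose_mat Phi ^\<^sub>m (K - Suc i) *\<^sub>v z)) k
    = Phi ^\<^sub>m k *\<^sub>v X0 + ctrb_gramian Phi Psi k *\<^sub>v (transpose_mat Phi ^\<^sub>m (K - k) *\<^sub>v z)"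
  using k
proof (induction k)
  case 0
  have PhiT: "transpose_mat Phi \<in> carrier_mat n n" using Phi by simp
  have "0\<^sub>m n n *\<^sub>v (transpose_mat Phi ^\<^sub>m K *\<^sub>v z) = 0\<^sub>v n"
    using mult_mat_vec_carrier[OF pow_carrier_mat[OF PhiT] z] by (intro eq_vecI) auto
  then show ?case using Phi X0 by simp
next
  case (Suc k)
  define G where "G = ctrb_gramian Phi Psi k"
  have G: "G \<in> carrier_mat n n" unfolding G_def using ctrb_gramian_carrier[OF Phi Psi] .
  define w where "w = transpose_mat Phi ^\<^sub>m (K - Suc k) *\<^sub>v z"
  have w: "w \<in> carrier_vec n"
    unfolding w_def using mult_mat_vec_carrier[OF pow_carrier_mat z] Phi by simp
  have "K - k = Suc (K - Suc k)" using Suc.prems by simp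
  then have shift: "transpose_mat Phi ^\<^sub>m (K - k) *\<^sub>v z = transpose_mat Phi *\<^sub>v w"
    unfolding w_def using Phi z
    by (simp add: pow_mat_Suc_left[of _ n] assoc_mult_mat_vec[of _ n n _ n] del: pow_mat.simps)
  have "traj Phi Psi X0 (\<lambda>i. transpose_mat Psi *\<^sub>v (transpose_mat Phi ^\<^sub>m (K - Suc i) *\<^sub>v z)) (Suc k)
      = Phi *\<^sub>v (Phi ^\<^sub>m k *\<^sub>v X0 + G *\<^sub>v (transpose_mat Phi *\<^sub>v w)) + Psi *\<^sub>v (transpose_mat Psi *\<^sub>v w)"
    using Suc shift by (simp add: G_def w_def)
  also have "\<dots> = Phi *\<^sub>v (Phi ^\<^sub>m k *\<^sub>v X0) + (Phi *\<^sub>v (G *\<^sub>v (transpose_mat Phi *\<^sub>v w))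
      + Psi *\<^sub>v (transpose_mat Psi *\<^sub>v w))"
  proof -
    have a: "Phi ^\<^sub>m k *\<^sub>v X0 \<in> carrier_vec n"
      using mult_mat_vec_carrier[OF pow_carrier_mat[OF Phi] X0] .
    have b: "G *\<^sub>v (transpose_mat Phi *\<^sub>v w) \<in> carrier_vec n"
      using G Phi w by (meson mult_mat_vec_carrier transpose_carrier_mat)
    have c: "Psi *\<^sub>v (transpose_mat Psi *\<^sub>v w) \<in> carrier_vec n"
      using Psi w by (meson mult_mat_vec_carrier transpose_carrier_mat)
    show ?thesis
      using mult_add_distrib_mat_vec[OF Phi a b] assoc_add_vec[OF mult_mat_vec_carrier[OF Phi a]
          mult_mat_vec_carrier[OF Phi b] c] by simp
  qed
  also have "\<dots> = Phi ^\<^sub>m Suc k *\<^sub>v X0 + ctrb_gramian Phi Psi (Suc k) *\<^sub>v w"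
    using Phi Psi G X0 w
    by (simp add: G_def add_mult_distrib_mat_vec[of _ n n] assoc_mult_mat_vec[of _ n n _ n]
        pow_mat_Suc_left[of _ n] del: pow_mat.simps)
  finally show ?case by (simp add: w_def)
qed

lemma dt_controllable_if_Kalman_rank:
  fixes Phi Psi :: "real mat"
  assumes Phi: "Phi \<in> carrier_mat n n" and Psi: "Psi \<in> carrier_mat n p"
    and Kalman: "\<And>y. y \<in> carrier_vec n \<Longrightarrow>
      (\<forall>j<K. transpose_mat (Phi ^\<^sub>m j * Psi) *\<^sub>v y = 0\<^sub>v p) \<Longrightarrow> y = 0\<^sub>v n"
  shows "dt_controllable Phi Psi"
  unfolding dt_controllable_def
proof
  let ?G = "ctrb_gramian Phi Psi K"
  have G: "?G \<in> carrier_mat n n" using ctrb_gramian_carrier[OF Phi Psi] .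
  have "det ?G \<noteq> 0"
  proof
    assume "det ?G = 0"
    then obtain y where y: "y \<in> carrier_vec n" "y \<noteq> 0\<^sub>v n" "?G *\<^sub>v y = 0\<^sub>v n"
      using det_0_iff_vec_prod_zero[OF G] by auto
    then have "y \<bullet> (?G *\<^sub>v y) = 0" by simp
    then show False using ctrb_gramian_quadratic_form[OF Phi Psi y(1)] Kalman y(1,2) by blast
  qed
  fix X0 :: "real vec" assume "X0 \<in> carrier_vec (dim_row Phi)"
  then have X0: "X0 \<in> carrier_vec n" using Phi by simp
  have PhiX0: "Phi ^\<^sub>m K *\<^sub>v X0 \<in> carrier_vec n"
    using mult_mat_vec_carrier[OF pow_carrier_mat[OF Phi] X0] .
  then have "- (Phi ^\<^sub>m K *\<^sub>v X0) \<in> carrier_vec n" by simp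
  then obtain z where z: "z \<in> carrier_vec n" "?G *\<^sub>v z = - (Phi ^\<^sub>m K *\<^sub>v X0)"
    using det_nonzero_imp_solvable[OF G \<open>det ?G \<noteq> 0\<close>] by blast
  define U where "U = (\<lambda>i. transpose_mat Psi *\<^sub>v (transpose_mat Phi ^\<^sub>m (K - Suc i) *\<^sub>v z))"
  have "traj Phi Psi X0 U K = Phi ^\<^sub>m K *\<^sub>v X0 + ?G *\<^sub>v z"
    unfolding U_def using traj_gramian_input[OF Phi Psi X0 z(1), of K K] Phi z by simp
  also have "\<dots> = 0\<^sub>v n" using z(2) PhiX0 by simp
  finally have "traj Phi Psi X0 U K = 0\<^sub>v (dim_row Phi)" using Phi by simp
  moreover have "U k \<in> carrier_vec (dim_col Psi)" for k
  proof -
    have "transpose_mat Phi ^\<^sub>m (K - Suc k) *\<^sub>v z \<in> carrier_vec n"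
      using Phi z(1) by (meson mult_mat_vec_carrier pow_carrier_mat transpose_carrier_mat)
    then have "U k \<in> carrier_vec p"
      unfolding U_def using Psi by (meson mult_mat_vec_carrier transpose_carrier_mat)
    then show ?thesis using Psi by simp
  qed
  ultimately show "\<exists>U K. (\<forall>k. U k \<in> carrier_vec (dim_col Psi)) \<and> traj Phi Psi X0 U K = 0\<^sub>v (dim_row Phi)"
    by blast
qed

section \<open>The Popov-Belevitch-Hautus test\<close>

lemma exists_nontrivial_linear_dependency:
  fixes w :: "nat \<Rightarrow> nat \<Rightarrow> 'a::field"
  shows "\<exists>c. (\<exists>k\<le>D. c k \<noteq> 0) \<and> (\<forall>i<D. (\<Sum>k\<le>D. c k * w k i) = 0)"
proof -
  define M where "M = mat D D (\<lambda>(i,k). w k i)"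
  have M: "M \<in> carrier_mat D D" unfolding M_def by simp
  show ?thesis
  proof (cases "det M = 0")
    case True
    then obtain v where v: "v \<in> carrier_vec D" "v \<noteq> 0\<^sub>v D" "M *\<^sub>v v = 0\<^sub>v D"
      using det_0_iff_vec_prod_zero[OF M] by auto
    obtain k where k: "k < D" "v $ k \<noteq> 0" using v(1,2) by (metis eq_vecI carrier_vecD index_zero_vec(1,2))
    define c where "c = (\<lambda>k. if k < D then v $ k else 0)"
    have "(\<Sum>k\<le>D. c k * w k i) = 0" if i: "i < D" for i
    proof -
      have "(\<Sum>k\<le>D. c k * w k i) = (\<Sum>k<D. c k * w k i)"
        unfolding lessThan_Suc_atMost[symmetric] by (simp add: c_def)
      also have "\<dots> = (M *\<^sub>v v) $ i" using index_mult_mat_vec_sum[OF M v(1) i]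
        by (auto simp: c_def M_def i intro!: sum.cong)
      also have "\<dots> = 0" using v(3) i by simp
      finally show ?thesis .
    qed
    moreover have "c k \<noteq> 0" using k by (simp add: c_def)
    ultimately show ?thesis using k(1) less_imp_le by blast
  next
    case False
    obtain y where y: "y \<in> carrier_vec D" "M *\<^sub>v y = vec D (w D)"
      using det_nonzero_imp_solvable[OF M False, of "vec D (w D)"] by auto
    define c where "c = (\<lambda>k. if k < D then y $ k else -1)"
    have "(\<Sum>k\<le>D. c k * w k i) = 0" if i: "i < D" for i
    proof -
      have "(\<Sum>k\<le>D. c k * w k i) = (\<Sum>k<D. c k * w k i) - w D i"
        unfolding lessThan_Suc_atMost[symmetric] by (simp add: c_def)
      also have "(\<Sum>k<D. c k * w k i) = (M *\<^sub>v y) $ i" using index_mult_mat_vec_sum[OF M y(1) i]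
        by (auto simp: c_def M_def i intro!: sum.cong)
      also have "\<dots> = w D i" using y(2) i by simp
      finally show ?thesis by simp
    qed
    moreover have "c D \<noteq> 0" by (simp add: c_def)
    ultimately show ?thesis by (intro exI[of _ c]) auto
  qed
qed

definition ctrb_left_kernel :: "'a::comm_ring_1 mat \<Rightarrow> 'a mat \<Rightarrow> nat \<Rightarrow> 'a mat set" where
  "ctrb_left_kernel F G K =
     {\<eta> \<in> carrier_mat 1 (dim_row F). \<forall>j<K. \<eta> * (F ^\<^sub>m j * G) = 0\<^sub>m 1 (dim_col G)}"

lemma ctrb_left_kernel_mult_right:
  assumes F: "F \<in> carrier_mat n n" and G: "G \<in> carrier_mat n p"
    and \<eta>: "\<eta> \<in> ctrb_left_kernel F G (Suc K)"
  shows "\<eta> * F \<in> ctrb_left_kernel F G K"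
proof -
  have \<eta>_carrier: "\<eta> \<in> carrier_mat 1 n" using \<eta> F unfolding ctrb_left_kernel_def by auto
  have "(\<eta> * F) * (F ^\<^sub>m j * G) = \<eta> * (F ^\<^sub>m Suc j * G)" for j
    using assoc_mult_mat[OF \<eta>_carrier F mult_carrier_mat[OF pow_carrier_mat[OF F] G]]
      assoc_mult_mat[OF F pow_carrier_mat[OF F] G]
    by (simp add: pow_mat_Suc_left[OF F] del: pow_mat.simps)
  then show ?thesis using \<eta> F G unfolding ctrb_left_kernel_def by auto
qed

lemma ctrb_left_kernel_stabilizes:
  fixes F G :: "'a::field mat"
  assumes F: "F \<in> carrier_mat n n" and G: "G \<in> carrier_mat n p"
  shows "\<exists>K. ctrb_left_kernel F G K \<subseteq> ctrb_left_kernel F G (Suc K)"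
proof (rule ccontr)
  assume "\<not> ?thesis"
  then have "\<forall>K. \<exists>\<eta>. \<eta> \<in> ctrb_left_kernel F G K \<and> \<eta> \<notin> ctrb_left_kernel F G (Suc K)" by blast
  then obtain e where e: "\<And>K. e K \<in> ctrb_left_kernel F G K \<and> e K \<notin> ctrb_left_kernel F G (Suc K)"
    by metis
  have e_carrier: "e K \<in> carrier_mat 1 n" for K using e[of K] F unfolding ctrb_left_kernel_def by auto
  have e_zero: "e K * (F ^\<^sub>m j * G) = 0\<^sub>m 1 p" if "j < K" for K j
    using e[of K] that G unfolding ctrb_left_kernel_def by auto
  have e_nonzero: "e K * (F ^\<^sub>m K * G) \<noteq> 0\<^sub>m 1 p" for K
    using e[of K] e_carrier[of K] e_zero[of _ K] F G unfolding ctrb_left_kernel_def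
    by (auto simp: less_Suc_eq)
  \<comment> \<open>The rows \<open>e 0, \<dots>, e n\<close> are linearly dependent; multiplying a dependency by \<open>F\<^sup>k G\<close>,
    \<open>k\<close> its first nonzero coefficient, kills all later rows and leaves \<open>e k * F\<^sup>k G = 0\<close>.\<close>
  obtain c where c: "\<exists>k\<le>n. c k \<noteq> 0" "\<forall>i<n. (\<Sum>k\<le>n. c k * e k $$ (0,i)) = 0"
    using exists_nontrivial_linear_dependency[of n "\<lambda>k i. e k $$ (0,i)"] by blast
  define k0 where "k0 = (LEAST k. c k \<noteq> 0)"
  have k0: "c k0 \<noteq> 0" "k0 \<le> n" "\<forall>k<k0. c k = 0"
  proof -
    obtain k where k: "k \<le> n" "c k \<noteq> 0" using c(1) by blast
    show "c k0 \<noteq> 0" unfolding k0_def using k by (intro LeastI) auto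
    show "k0 \<le> n" unfolding k0_def using k by (meson Least_le order_trans)
    show "\<forall>k<k0. c k = 0" unfolding k0_def using not_less_Least by blast
  qed
  define M where "M = F ^\<^sub>m k0 * G"
  have M: "M \<in> carrier_mat n p" unfolding M_def using mult_carrier_mat[OF pow_carrier_mat[OF F] G] .
  have "e k0 * M = 0\<^sub>m 1 p"
  proof (rule eq_matI)
    fix i l assume "i < dim_row (0\<^sub>m 1 p :: 'a mat)" "l < dim_col (0\<^sub>m 1 p :: 'a mat)"
    then have i: "i = 0" and l: "l < p" by auto
    have "c k0 * (e k0 * M) $$ (0,l) = (\<Sum>k\<le>n. c k * (e k * M) $$ (0,l))"
    proof -
      have others: "c k * (e k * M) $$ (0,l) = 0" if "k \<noteq> k0" for k
      proof (cases "k < k0")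
        case False
        then have "e k * M = 0\<^sub>m 1 p" using that unfolding M_def by (intro e_zero) simp
        then show ?thesis using l by simp
      qed (use k0(3) in simp)
      show ?thesis using k0(2) by (subst sum.remove[of _ k0]) (auto intro!: sum.neutral others)
    qed
    also have "\<dots> = (\<Sum>k\<le>n. \<Sum>j<n. c k * e k $$ (0,j) * M $$ (j,l))"
      using e_carrier M l by (simp add: index_mult_mat_sum[of _ 1 n _ p] sum_distrib_left mult.assoc)
    also have "\<dots> = (\<Sum>j<n. (\<Sum>k\<le>n. c k * e k $$ (0,j)) * M $$ (j,l))"
      by (subst sum.swap) (simp add: sum_distrib_right)
    also have "\<dots> = 0" using c(2) by simp
    finally show "(e k0 * M) $$ (i,l) = 0\<^sub>m 1 p $$ (i,l)" using k0(1) i l by simp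
  qed (use e_carrier M in auto)
  then show False using e_nonzero[of k0] unfolding M_def by simp
qed

lemma upper_triangular_mult_leading_zeros:
  fixes T :: "'a::comm_ring_1 mat"
  assumes T: "T \<in> carrier_mat n n" "upper_triangular T" and \<zeta>: "\<zeta> \<in> carrier_mat 1 n"
    and i: "i < n" and zeros: "\<And>k. k < i \<Longrightarrow> \<zeta> $$ (0,k) = 0" and j: "j \<le> i"
  shows "(\<zeta> * T - T $$ (i,i) \<cdot>\<^sub>m \<zeta>) $$ (0,j) = 0"
proof -
  have "\<zeta> $$ (0,k) * T $$ (k,j) = (if k = j then \<zeta> $$ (0,j) * T $$ (i,i) else 0)" if k: "k < n" for k
  proof (cases "k < i")
    case False
    then have "k = j \<and> j = i \<or> j < k" using j by auto
    then show ?thesis using T k j i unfolding upper_triangular_def by auto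
  qed (use zeros j in auto)
  then have "(\<Sum>k<n. \<zeta> $$ (0,k) * T $$ (k,j)) = \<zeta> $$ (0,j) * T $$ (i,i)"
    using j i by (simp add: sum.delta)
  then have "(\<zeta> * T) $$ (0,j) = \<zeta> $$ (0,j) * T $$ (i,i)"
    using index_mult_mat_sum[OF \<zeta> T(1)] j i by simp
  then show ?thesis using \<zeta> T j i by simp
qed

lemma upper_triangular_left_eigenvector_in_subspace:
  fixes T :: "'a::field mat"
  assumes T: "T \<in> carrier_mat n n" "upper_triangular T"
    and Z: "Z \<subseteq> carrier_mat 1 n"
    and closed: "\<And>\<zeta> \<theta>. \<zeta> \<in> Z \<Longrightarrow> \<zeta> * T - \<theta> \<cdot>\<^sub>m \<zeta> \<in> Z"
    and \<zeta>0: "\<zeta>0 \<in> Z" "\<zeta>0 \<noteq> 0\<^sub>m 1 n"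
  shows "\<exists>\<zeta>\<in>Z. \<zeta> \<noteq> 0\<^sub>m 1 n \<and> (\<exists>\<theta>. \<zeta> * T = \<theta> \<cdot>\<^sub>m \<zeta>)"
proof -
  define lead where "lead = (\<lambda>\<zeta>::'a mat. LEAST i. \<zeta> $$ (0,i) \<noteq> 0)"
  have lead: "lead \<zeta> < n" "\<zeta> $$ (0, lead \<zeta>) \<noteq> 0" "\<forall>k<lead \<zeta>. \<zeta> $$ (0,k) = 0"
    if \<zeta>_in: "\<zeta> \<in> Z" and \<zeta>_nonzero: "\<zeta> \<noteq> 0\<^sub>m 1 n" for \<zeta>
  proof -
    obtain i where i: "i < n" "\<zeta> $$ (0,i) \<noteq> 0"
    proof (rule ccontr)
      assume "\<not> thesis"
      then have "\<zeta> = 0\<^sub>m 1 n" using that \<zeta>_in Z by (intro eq_matI) auto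
      then show False using \<zeta>_nonzero by simp
    qed
    show "lead \<zeta> < n" unfolding lead_def using i by (meson Least_le le_less_trans)
    show "\<zeta> $$ (0, lead \<zeta>) \<noteq> 0" unfolding lead_def using i(2) by (rule LeastI)
    show "\<forall>k<lead \<zeta>. \<zeta> $$ (0,k) = 0" unfolding lead_def using not_less_Least by blast
  qed
  \<comment> \<open>Take a nonzero \<open>\<zeta> \<in> Z\<close> whose leading entry is as far right as possible.\<close>
  obtain \<zeta> where \<zeta>: "\<zeta> \<in> Z" "\<zeta> \<noteq> 0\<^sub>m 1 n"
    and max: "\<And>\<zeta>'. \<zeta>' \<in> Z \<Longrightarrow> \<zeta>' \<noteq> 0\<^sub>m 1 n \<Longrightarrow> lead \<zeta>' \<le> lead \<zeta>"
    using ex_has_greatest_nat[of "\<lambda>\<zeta>. \<zeta> \<in> Z \<and> \<zeta> \<noteq> 0\<^sub>m 1 n" \<zeta>0 lead n] \<zeta>0 lead(1)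
    by force
  define i where "i = lead \<zeta>"
  define \<theta> where "\<theta> = T $$ (i,i)"
  have \<zeta>_carrier: "\<zeta> \<in> carrier_mat 1 n" using \<zeta> Z by auto
  have i: "i < n" "\<forall>k<i. \<zeta> $$ (0,k) = 0" using lead[OF \<zeta>] unfolding i_def by auto
  define \<zeta>' where "\<zeta>' = \<zeta> * T - \<theta> \<cdot>\<^sub>m \<zeta>"
  have \<zeta>'_head: "\<zeta>' $$ (0,j) = 0" if "j \<le> i" for j
    unfolding \<zeta>'_def \<theta>_def using upper_triangular_mult_leading_zeros[OF T \<zeta>_carrier i(1)] i(2) that by blast
  have "\<zeta>' = 0\<^sub>m 1 n"
  proof (rule ccontr)
    assume nonzero: "\<zeta>' \<noteq> 0\<^sub>m 1 n"
    have "\<zeta>' \<in> Z" unfolding \<zeta>'_def using closed \<zeta>(1) .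
    then show False using lead(2)[OF _ nonzero] max[OF _ nonzero] \<zeta>'_head unfolding i_def by auto
  qed
  have "\<zeta> * T = \<theta> \<cdot>\<^sub>m \<zeta>"
  proof (rule eq_matI)
    fix a j assume "a < dim_row (\<theta> \<cdot>\<^sub>m \<zeta>)" "j < dim_col (\<theta> \<cdot>\<^sub>m \<zeta>)"
    then have a: "a = 0" and j: "j < n" using \<zeta>_carrier by auto
    have "\<zeta>' $$ (0,j) = 0" using \<open>\<zeta>' = 0\<^sub>m 1 n\<close> j by simp
    then show "(\<zeta> * T) $$ (a,j) = (\<theta> \<cdot>\<^sub>m \<zeta>) $$ (a,j)"
      unfolding \<zeta>'_def using \<zeta>_carrier T a j by simp
  qed (use \<zeta>_carrier T in auto)
  then show ?thesis using \<zeta> by blast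
qed

lemma similar_row_mult:
  fixes T :: "'a::semiring_1 mat"
  assumes P: "P \<in> carrier_mat n n" and Q: "Q \<in> carrier_mat n n" and T: "T \<in> carrier_mat n n"
    and QP: "Q * P = 1\<^sub>m n" and F: "F = P * T * Q" and \<zeta>: "\<zeta> \<in> carrier_mat 1 n"
  shows "\<zeta> * T * Q = (\<zeta> * Q) * F"
proof -
  have \<zeta>Q: "\<zeta> * Q \<in> carrier_mat 1 n" using \<zeta> Q by simp
  have "(\<zeta> * Q) * F = ((\<zeta> * Q) * (P * T)) * Q"
    unfolding F using assoc_mult_mat[OF \<zeta>Q mult_carrier_mat[OF P T] Q] by simp
  also have "(\<zeta> * Q) * (P * T) = ((\<zeta> * Q) * P) * T" using assoc_mult_mat[OF \<zeta>Q P T] by simp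
  also have "(\<zeta> * Q) * P = \<zeta>" using assoc_mult_mat[OF \<zeta> Q P] QP right_mult_one_mat[OF \<zeta>] by simp
  finally show ?thesis by simp
qed

lemma left_eigenvector_in_invariant_subspace:
  fixes F :: "complex mat"
  assumes F: "F \<in> carrier_mat n n"
    and L: "L \<subseteq> carrier_mat 1 n"
    and closed: "\<And>\<eta> \<theta>. \<eta> \<in> L \<Longrightarrow> \<eta> * F - \<theta> \<cdot>\<^sub>m \<eta> \<in> L"
    and \<eta>0: "\<eta>0 \<in> L" "\<eta>0 \<noteq> 0\<^sub>m 1 n"
  shows "\<exists>\<eta>\<in>L. \<eta> \<noteq> 0\<^sub>m 1 n \<and> (\<exists>\<theta>. \<eta> * F = \<theta> \<cdot>\<^sub>m \<eta>)"
proof -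
  obtain es where "char_poly F = (\<Prod>a\<leftarrow>es. [:- a, 1:])" using char_poly_factorized[OF F] by blast
  then obtain T where T: "T \<in> carrier_mat n n" "upper_triangular T" "similar_mat F T"
    using schur_decomposition_exists[OF F] by blast
  then obtain P Q where P: "P \<in> carrier_mat n n" and Q: "Q \<in> carrier_mat n n"
    and PQ: "P * Q = 1\<^sub>m n" and QP: "Q * P = 1\<^sub>m n" and F_eq: "F = P * T * Q"
    using similar_matD[OF T(3)] F by (metis carrier_matD(1) insert_subset)
  define Z where "Z = {\<zeta> \<in> carrier_mat 1 n. \<zeta> * Q \<in> L}"
  have Z: "Z \<subseteq> carrier_mat 1 n" unfolding Z_def by auto
  have Z_closed: "\<zeta> * T - \<theta> \<cdot>\<^sub>m \<zeta> \<in> Z" if \<zeta>: "\<zeta> \<in> Z" for \<zeta> \<theta>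
  proof -
    have \<zeta>_carrier: "\<zeta> \<in> carrier_mat 1 n" using \<zeta> unfolding Z_def by simp
    have "(\<zeta> * T - \<theta> \<cdot>\<^sub>m \<zeta>) * Q = \<zeta> * T * Q - \<theta> \<cdot>\<^sub>m (\<zeta> * Q)"
      using minus_mult_distrib_mat[OF mult_carrier_mat[OF \<zeta>_carrier T(1)] smult_carrier_mat[OF \<zeta>_carrier] Q]
        mult_smult_assoc_mat[OF \<zeta>_carrier Q] by simp
    also have "\<dots> = (\<zeta> * Q) * F - \<theta> \<cdot>\<^sub>m (\<zeta> * Q)"
      unfolding similar_row_mult[OF P Q T(1) QP F_eq \<zeta>_carrier] ..
    finally have "(\<zeta> * T - \<theta> \<cdot>\<^sub>m \<zeta>) * Q \<in> L" using closed \<zeta> unfolding Z_def by simp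
    moreover have "\<zeta> * T - \<theta> \<cdot>\<^sub>m \<zeta> \<in> carrier_mat 1 n"
      using \<zeta>_carrier T(1) by (metis minus_carrier_mat mult_carrier_mat smult_carrier_mat)
    ultimately show ?thesis unfolding Z_def by simp
  qed
  have \<eta>0_carrier: "\<eta>0 \<in> carrier_mat 1 n" using \<eta>0 L by auto
  have \<eta>0PQ: "\<eta>0 * P * Q = \<eta>0" using assoc_mult_mat[OF \<eta>0_carrier P Q] PQ \<eta>0_carrier by simp
  then have "\<eta>0 * P \<in> Z" unfolding Z_def using \<eta>0(1) \<eta>0_carrier P by simp
  moreover have "\<eta>0 * P \<noteq> 0\<^sub>m 1 n"
  proof
    assume "\<eta>0 * P = 0\<^sub>m 1 n"
    then have "\<eta>0 = 0\<^sub>m 1 n * Q" using \<eta>0PQ by simp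
    then show False using \<eta>0(2) Q by simp
  qed
  ultimately obtain \<zeta> \<theta> where \<zeta>: "\<zeta> \<in> Z" "\<zeta> \<noteq> 0\<^sub>m 1 n" "\<zeta> * T = \<theta> \<cdot>\<^sub>m \<zeta>"
    using upper_triangular_left_eigenvector_in_subspace[OF T(1,2) Z Z_closed] by blast
  have \<zeta>_carrier: "\<zeta> \<in> carrier_mat 1 n" using \<zeta>(1) Z by auto
  have "\<zeta> * Q * P = \<zeta>" using assoc_mult_mat[OF \<zeta>_carrier Q P] QP \<zeta>_carrier by simp
  then have "\<zeta> * Q \<noteq> 0\<^sub>m 1 n" using \<zeta>(2) P by auto
  moreover have "(\<zeta> * Q) * F = \<theta> \<cdot>\<^sub>m (\<zeta> * Q)"
    using similar_row_mult[OF P Q T(1) QP F_eq \<zeta>_carrier] \<zeta>(3) mult_smult_assoc_mat[OF \<zeta>_carrier Q] by simp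
  moreover have "\<zeta> * Q \<in> L" using \<zeta>(1) unfolding Z_def by simp
  ultimately show ?thesis by blast
qed

lemma ctrb_left_kernel_trivial_if_PBH:
  fixes F G :: "complex mat"
  assumes F: "F \<in> carrier_mat n n" and G: "G \<in> carrier_mat n p"
    and PBH: "\<And>\<theta> \<eta>. \<eta> \<in> carrier_mat 1 n \<Longrightarrow> \<eta> * F = \<theta> \<cdot>\<^sub>m \<eta> \<Longrightarrow> \<eta> * G = 0\<^sub>m 1 p \<Longrightarrow>
      \<eta> = 0\<^sub>m 1 n"
  shows "\<exists>K. \<forall>\<eta>\<in>ctrb_left_kernel F G K. \<eta> = 0\<^sub>m 1 n"
proof -
  obtain K where K: "ctrb_left_kernel F G K \<subseteq> ctrb_left_kernel F G (Suc K)"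
    using ctrb_left_kernel_stabilizes[OF F G] by blast
  let ?L = "ctrb_left_kernel F G K"
  have L: "?L \<subseteq> carrier_mat 1 n" using F unfolding ctrb_left_kernel_def by auto
  have kernel_iff: "\<eta> \<in> ctrb_left_kernel F G k \<longleftrightarrow>
      \<eta> \<in> carrier_mat 1 n \<and> (\<forall>j<k. \<eta> * (F ^\<^sub>m j * G) = 0\<^sub>m 1 p)" for \<eta> k
    using F G unfolding ctrb_left_kernel_def by simp
  have closed: "\<eta> * F - \<theta> \<cdot>\<^sub>m \<eta> \<in> ?L" if \<eta>: "\<eta> \<in> ?L" for \<eta> \<theta>
  proof -
    have \<eta>_carrier: "\<eta> \<in> carrier_mat 1 n" using \<eta> L by auto
    have \<eta>F: "\<eta> * F \<in> ?L" using ctrb_left_kernel_mult_right[OF F G] \<eta> K by blast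
    have "(\<eta> * F - \<theta> \<cdot>\<^sub>m \<eta>) * (F ^\<^sub>m j * G) = 0\<^sub>m 1 p" if j: "j < K" for j
    proof -
      have FjG: "F ^\<^sub>m j * G \<in> carrier_mat n p" using mult_carrier_mat[OF pow_carrier_mat[OF F] G] .
      have "(\<eta> * F - \<theta> \<cdot>\<^sub>m \<eta>) * (F ^\<^sub>m j * G)
          = (\<eta> * F) * (F ^\<^sub>m j * G) - \<theta> \<cdot>\<^sub>m (\<eta> * (F ^\<^sub>m j * G))"
        using minus_mult_distrib_mat[OF mult_carrier_mat[OF \<eta>_carrier F] smult_carrier_mat[OF \<eta>_carrier] FjG]
          mult_smult_assoc_mat[OF \<eta>_carrier FjG] by simp
      also have "\<dots> = 0\<^sub>m 1 p - \<theta> \<cdot>\<^sub>m 0\<^sub>m 1 p" using \<eta> \<eta>F j unfolding kernel_iff by simp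
      finally show ?thesis by simp
    qed
    moreover have "\<eta> * F - \<theta> \<cdot>\<^sub>m \<eta> \<in> carrier_mat 1 n"
      using \<eta>_carrier F by (metis minus_carrier_mat mult_carrier_mat smult_carrier_mat)
    ultimately show ?thesis unfolding kernel_iff by simp
  qed
  have annihilates: "\<eta> * G = 0\<^sub>m 1 p" if "\<eta> \<in> ?L" for \<eta>
  proof -
    have "\<eta> \<in> ctrb_left_kernel F G (Suc K)" using K that by blast
    then have "\<eta> * (F ^\<^sub>m 0 * G) = 0\<^sub>m 1 p" unfolding kernel_iff by blast
    then show ?thesis using F G by simp
  qed
  have "\<eta> = 0\<^sub>m 1 n" if \<eta>: "\<eta> \<in> ?L" for \<eta>
  proof (rule ccontr)
    assume "\<eta> \<noteq> 0\<^sub>m 1 n"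
    then obtain \<eta>' \<theta> where \<eta>': "\<eta>' \<in> ?L" "\<eta>' \<noteq> 0\<^sub>m 1 n" "\<eta>' * F = \<theta> \<cdot>\<^sub>m \<eta>'"
      using left_eigenvector_in_invariant_subspace[OF F L closed \<eta>] by blast
    have "\<eta>' \<in> carrier_mat 1 n" using \<eta>'(1) L by auto
    then have "\<eta>' = 0\<^sub>m 1 n" using PBH \<eta>'(3) annihilates[OF \<eta>'(1)] by blast
    then show False using \<eta>'(2) by contradiction
  qed
  then show ?thesis by blast
qed

lemma cpx_carrier[simp]: "M \<in> carrier_mat a b \<Longrightarrow> cpx M \<in> carrier_mat a b"
  unfolding cpx_def by simp

lemma cpx_mult: "A \<in> carrier_mat a b \<Longrightarrow> B \<in> carrier_mat b c \<Longrightarrow> cpx (A * B) = cpx A * cpx B"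
  unfolding cpx_def by (rule of_real_hom.mat_hom_mult)

lemma cpx_pow: "A \<in> carrier_mat a a \<Longrightarrow> cpx (A ^\<^sub>m k) = cpx A ^\<^sub>m k"
  unfolding cpx_def by (rule of_real_hom.mat_hom_pow)

lemma cpx_add: "A \<in> carrier_mat a b \<Longrightarrow> B \<in> carrier_mat a b \<Longrightarrow> cpx (A + B) = cpx A + cpx B"
  unfolding cpx_def by (rule eq_matI) auto

lemma cpx_one: "cpx (1\<^sub>m n) = 1\<^sub>m n"
  unfolding cpx_def by (rule of_real_hom.mat_hom_one)

lemma cpx_kron: "cpx (kron P Q) = kron (cpx P) (cpx Q)"
proof (rule eq_matI)
  fix i j assume "i < dim_row (kron (cpx P) (cpx Q))" "j < dim_col (kron (cpx P) (cpx Q))"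
  then have ij: "i < dim_row P * dim_row Q" "j < dim_col P * dim_col Q" by (simp_all add: kron_def cpx_def)
  then have "0 < dim_row Q" "0 < dim_col Q" by (auto intro: gr0I)
  with ij show "cpx (kron P Q) $$ (i, j) = kron (cpx P) (cpx Q) $$ (i, j)"
    by (auto simp: kron_def cpx_def less_mult_imp_div_less)
qed (simp_all add: kron_def cpx_def)

lemma mat_of_row_mult:
  fixes M :: "'a::comm_semiring_0 mat"
  assumes y: "y \<in> carrier_vec n" and M: "M \<in> carrier_mat n p"
  shows "mat_of_row y * M = mat_of_row (transpose_mat M *\<^sub>v y)"
proof (rule eq_matI)
  fix i l assume "i < dim_row (mat_of_row (transpose_mat M *\<^sub>v y))"
    "l < dim_col (mat_of_row (transpose_mat M *\<^sub>v y))"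
  then have i: "i = 0" and l: "l < p" using M by auto
  have "y \<bullet> col M l = col M l \<bullet> y" using comm_scalar_prod[OF y col_carrier_vec[OF l M]] .
  then show "(mat_of_row y * M) $$ (i, l) = mat_of_row (transpose_mat M *\<^sub>v y) $$ (i, l)"
    using i l y M by simp
qed (use y M in auto)

theorem dt_controllable_if_PBH:
  fixes Phi Psi :: "real mat"
  assumes Phi: "Phi \<in> carrier_mat n n" and Psi: "Psi \<in> carrier_mat n p"
    and PBH: "\<And>\<theta> \<eta>. \<eta> \<in> carrier_mat 1 n \<Longrightarrow> \<eta> * cpx Phi = \<theta> \<cdot>\<^sub>m \<eta> \<Longrightarrow>
      \<eta> * cpx Psi = 0\<^sub>m 1 p \<Longrightarrow> \<eta> = 0\<^sub>m 1 n"
  shows "dt_controllable Phi Psi"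
proof -
  from ctrb_left_kernel_trivial_if_PBH[OF cpx_carrier[OF Phi] cpx_carrier[OF Psi] PBH]
  obtain K where K: "\<forall>\<eta>\<in>ctrb_left_kernel (cpx Phi) (cpx Psi) K. \<eta> = 0\<^sub>m 1 n" ..
  show ?thesis
  proof (rule dt_controllable_if_Kalman_rank[OF Phi Psi])
    fix y assume y: "y \<in> carrier_vec n"
      and kernel: "\<forall>j<K. transpose_mat (Phi ^\<^sub>m j * Psi) *\<^sub>v y = 0\<^sub>v p"
    define Y where "Y = mat_of_row y"
    have Y: "Y \<in> carrier_mat 1 n" unfolding Y_def using y by simp
    have "Y * (Phi ^\<^sub>m j * Psi) = 0\<^sub>m 1 p" if "j < K" for j
    proof -
      have "Y * (Phi ^\<^sub>m j * Psi) = mat_of_row (0\<^sub>v p)"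
        unfolding Y_def mat_of_row_mult[OF y mult_carrier_mat[OF pow_carrier_mat[OF Phi] Psi]]
        using kernel that by simp
      also have "\<dots> = 0\<^sub>m 1 p" by (rule eq_matI) auto
      finally show ?thesis .
    qed
    moreover have "cpx Y * (cpx Phi ^\<^sub>m j * cpx Psi) = cpx (Y * (Phi ^\<^sub>m j * Psi))" for j
      using cpx_mult[OF Y mult_carrier_mat[OF pow_carrier_mat[OF Phi] Psi]]
        cpx_mult[OF pow_carrier_mat[OF Phi] Psi] cpx_pow[OF Phi] by simp
    moreover have "cpx (0\<^sub>m 1 p) = 0\<^sub>m 1 p" unfolding cpx_def by auto
    ultimately have "cpx Y \<in> ctrb_left_kernel (cpx Phi) (cpx Psi) K"
      using cpx_carrier[OF Y] cpx_carrier[OF Phi] cpx_carrier[OF Psi]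
      unfolding ctrb_left_kernel_def by auto
    then have "cpx Y = 0\<^sub>m 1 n" using K by blast
    moreover have "cpx Y $$ (0, b) = complex_of_real (y $ b)" if "b < n" for b
      using that y unfolding cpx_def Y_def by simp
    ultimately show "y = 0\<^sub>v n" using y by (intro eq_vecI) auto
  qed
qed

section \<open>Left eigenvectors\<close>

lemma row_vector_eq_0_iff:
  assumes "\<xi> \<in> carrier_mat 1 n"
  shows "row \<xi> 0 = 0\<^sub>v n \<longleftrightarrow> \<xi> = 0\<^sub>m 1 n"
proof
  assume zero: "row \<xi> 0 = 0\<^sub>v n"
  show "\<xi> = 0\<^sub>m 1 n"
  proof (rule eq_matI)
    fix i j assume "i < dim_row (0\<^sub>m 1 n :: 'a mat)" "j < dim_col (0\<^sub>m 1 n :: 'a mat)"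
    then have "i = 0" "j < n" by auto
    then show "\<xi> $$ (i, j) = 0\<^sub>m 1 n $$ (i, j)"
      using arg_cong[OF zero, of "\<lambda>x. vec_index x j"] assms by simp
  qed (use assms in auto)
qed (use assms in auto)

lemma full_rank_imp_left_kernel_trivial:
  fixes M :: "'a::field mat"
  assumes M: "M \<in> carrier_mat n nc" and rank: "vec_space.rank n M = n"
    and \<xi>: "\<xi> \<in> carrier_mat 1 n" and kernel: "\<xi> * M = 0\<^sub>m 1 nc"
  shows "\<xi> = 0\<^sub>m 1 n"
proof -
  interpret vec_space "TYPE('a)" n .
  obtain S where S: "maximal S (\<lambda>T. T \<subseteq> set (cols M) \<and> lin_indpt T)"
    using maximal_exists[of "\<lambda>T. T \<subseteq> set (cols M) \<and> lin_indpt T" "card (set (cols M))" "{}"]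
    by (meson List.finite_set card_mono empty_iff empty_subsetI finite_lin_indpt2 rev_finite_subset)
  have card_S: "card S = n" using rank_card_indpt[OF M S] rank by simp
  have S_cols: "S \<subseteq> set (cols M)" and S_indpt: "lin_indpt S" using S unfolding maximal_def by auto
  obtain xs where xs: "set xs = S" "distinct xs"
    using finite_distinct_list[OF finite_subset[OF S_cols]] by blast
  have xs_carrier: "set xs \<subseteq> carrier_vec n" using xs S_cols M cols_dim by blast
  have length_xs: "length xs = n" using xs card_S distinct_card by fastforce
  \<comment> \<open>The \<open>n\<close> independent columns form an invertible matrix annihilated by \<open>\<xi>\<close>.\<close>
  define Q where "Q = mat_of_cols n xs"
  have Q: "Q \<in> carrier_mat n n" unfolding Q_def using length_xs by auto
  have cols_Q: "cols Q = xs" unfolding Q_def using xs_carrier by (simp add: cols_mat_of_cols)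
  have "det Q \<noteq> 0"
    using det_rank_iff[OF Q] lin_indpt_full_rank[OF Q] cols_Q xs S_indpt by simp
  then have det_QT: "det (transpose_mat Q) \<noteq> 0" using det_transpose[OF Q] by simp
  have "transpose_mat Q *\<^sub>v row \<xi> 0 = 0\<^sub>v n"
  proof (rule eq_vecI)
    fix k assume "k < dim_vec (0\<^sub>v n :: 'a vec)"
    then have k: "k < n" by simp
    have "xs ! k \<in> set (cols M)" using xs S_cols k length_xs by auto
    then obtain j where j: "j < nc" "xs ! k = col M j" using M
      by (metis cols_length cols_nth in_set_conv_nth carrier_matD(2))
    have "(transpose_mat Q *\<^sub>v row \<xi> 0) $ k = col M j \<bullet> row \<xi> 0"
      using k Q cols_Q j(2) by (metis carrier_matD(2) cols_nth index_mult_mat_vec index_transpose_mat(2) row_transpose)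
    also have "\<dots> = row \<xi> 0 \<bullet> col M j" by (rule comm_scalar_prod[of _ n]) (use M \<xi> in auto)
    also have "\<dots> = (\<xi> * M) $$ (0, j)" using \<xi> M j(1) by simp
    finally show "(transpose_mat Q *\<^sub>v row \<xi> 0) $ k = 0\<^sub>v n $ k" using kernel j(1) k by simp
  qed (use Q in simp)
  moreover have "row \<xi> 0 \<in> carrier_vec n" using row_carrier_vec[OF _ \<xi>] by simp
  ultimately have "row \<xi> 0 = 0\<^sub>v n"
    using det_0_iff_vec_prod_zero[of "transpose_mat Q" n] Q det_QT by auto
  then show ?thesis using row_vector_eq_0_iff[OF \<xi>] by simp
qed

lemma controllable_pair_left_eigenvector_zero:
  fixes F G :: "complex mat"
  assumes F: "F \<in> carrier_mat n n" and G: "G \<in> carrier_mat n p"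
    and ctrb: "controllable_pair F G" and \<xi>: "\<xi> \<in> carrier_mat 1 n"
    and eig: "\<xi> * F = s \<cdot>\<^sub>m \<xi>" and annihilates: "\<xi> * G = 0\<^sub>m 1 p"
  shows "\<xi> = 0\<^sub>m 1 n"
proof -
  define M where "M = mat n (n + p)
    (\<lambda>(i,j). if j < n then (s \<cdot>\<^sub>m 1\<^sub>m n - F) $$ (i,j) else G $$ (i, j - n))"
  have M: "M \<in> carrier_mat n (n + p)" unfolding M_def by simp
  have rank: "vec_space.rank n M = n" using ctrb F G unfolding controllable_pair_def M_def by auto
  have "\<xi> * M = 0\<^sub>m 1 (n + p)"
  proof (rule eq_matI)
    fix i j assume "i < dim_row (0\<^sub>m 1 (n + p) :: complex mat)" "j < dim_col (0\<^sub>m 1 (n + p) :: complex mat)"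
    then have i: "i = 0" and j: "j < n + p" by auto
    show "(\<xi> * M) $$ (i,j) = 0\<^sub>m 1 (n + p) $$ (i,j)"
    proof (cases "j < n")
      case True
      have "(\<xi> * M) $$ (0,j) = (\<Sum>k<n. (if k = j then s * \<xi> $$ (0,k) else 0) - \<xi> $$ (0,k) * F $$ (k,j))"
        using index_mult_mat_sum[OF \<xi> M _ j] True F
        by (auto simp: M_def right_diff_distrib intro!: sum.cong)
      also have "\<dots> = s * \<xi> $$ (0,j) - (\<xi> * F) $$ (0,j)"
        using True index_mult_mat_sum[OF \<xi> F _ True] by (simp add: sum_subtractf)
      finally show ?thesis using eig True \<xi> i by simp
    next
      case False
      have "(\<xi> * M) $$ (0,j) = (\<Sum>k<n. \<xi> $$ (0,k) * G $$ (k, j - n))"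
        using index_mult_mat_sum[OF \<xi> M _ j] False j by (auto simp: M_def intro!: sum.cong)
      also have "\<dots> = (\<xi> * G) $$ (0, j - n)" using index_mult_mat_sum[OF \<xi> G, of 0 "j - n"] False j by simp
      finally show ?thesis using annihilates False j i by simp
    qed
  qed (use \<xi> M in auto)
  then show ?thesis using full_rank_imp_left_kernel_trivial[OF M rank \<xi>] by blast
qed

lemma left_eigenvector_imp_eigenvalue:
  fixes E :: "'a::field mat"
  assumes E: "E \<in> carrier_mat n n" and \<xi>: "\<xi> \<in> carrier_mat 1 n" "\<xi> \<noteq> 0\<^sub>m 1 n"
    and eig: "\<xi> * E = \<theta> \<cdot>\<^sub>m \<xi>"
  shows "eigenvalue E \<theta>"
proof -
  have "row \<xi> 0 \<noteq> 0\<^sub>v n" using row_vector_eq_0_iff[OF \<xi>(1)] \<xi>(2) by simp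
  moreover have "transpose_mat E *\<^sub>v row \<xi> 0 = \<theta> \<cdot>\<^sub>v row \<xi> 0"
  proof (rule eq_vecI)
    fix j assume "j < dim_vec (\<theta> \<cdot>\<^sub>v row \<xi> 0)"
    then have j: "j < n" using \<xi>(1) by simp
    have "(transpose_mat E *\<^sub>v row \<xi> 0) $ j = row \<xi> 0 \<bullet> col E j"
      using E \<xi>(1) j comm_scalar_prod[OF col_carrier_vec[OF j E] row_carrier_vec[OF _ \<xi>(1)]] by simp
    also have "\<dots> = \<theta> * \<xi> $$ (0, j)"
      using arg_cong[OF eig, of "\<lambda>M. M $$ (0, j)"] E \<xi>(1) j by simp
    finally show "(transpose_mat E *\<^sub>v row \<xi> 0) $ j = (\<theta> \<cdot>\<^sub>v row \<xi> 0) $ j" using \<xi>(1) j by simp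
  qed (use E \<xi>(1) in simp)
  ultimately have "eigenvalue (transpose_mat E) \<theta>"
    using E row_carrier_vec[OF _ \<xi>(1)] unfolding eigenvalue_def eigenvector_def by auto
  then show ?thesis
    using eigenvalue_root_char_poly[OF E] eigenvalue_root_char_poly[of "transpose_mat E" n] E by simp
qed

section \<open>Weighted cycles\<close>

text \<open>The weighted adjacency matrix \<open>W\<^sub>c\<^sub>i\<^sub>r\<^sub>c\<^sub>l\<^sub>e\<close> of the directed cycle \<open>1 \<rightarrow> 2 \<rightarrow> \<dots> \<rightarrow> N \<rightarrow> 1\<close>.\<close>
definition cycle_matrix :: "nat \<Rightarrow> 'a::zero mat \<Rightarrow> bool" where
  "cycle_matrix N W \<longleftrightarrow> W \<in> carrier_mat N N \<and> W $$ (0, N - 1) \<noteq> 0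
     \<and> (\<forall>i. 1 \<le> i \<and> i < N \<longrightarrow> W $$ (i, i - 1) \<noteq> 0)
     \<and> (\<forall>i<N. \<forall>j<N. \<not> (i = 0 \<and> j = N - 1) \<and> \<not> (1 \<le> i \<and> j = i - 1) \<longrightarrow> W $$ (i, j) = 0)"

lemma cycle_matrix_column:
  assumes W: "cycle_matrix N W" and j: "j < N"
  shows "W $$ (Suc j mod N, j) \<noteq> 0" and "\<And>i. i < N \<Longrightarrow> i \<noteq> Suc j mod N \<Longrightarrow> W $$ (i, j) = 0"
proof -
  show "W $$ (Suc j mod N, j) \<noteq> 0"
  proof (cases "Suc j = N")
    case False
    have subdiagonal: "\<forall>i. 1 \<le> i \<and> i < N \<longrightarrow> W $$ (i, i - 1) \<noteq> 0"
      using W unfolding cycle_matrix_def by blast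
    show ?thesis using spec[OF subdiagonal, of "Suc j"] False j by simp
  qed (use W in \<open>auto simp: cycle_matrix_def\<close>)
  fix i assume "i < N" "i \<noteq> Suc j mod N"
  moreover have "\<not> (i = 0 \<and> j = N - 1)" "\<not> (1 \<le> i \<and> j = i - 1)" using calculation j by auto
  ultimately show "W $$ (i, j) = 0" using W j unfolding cycle_matrix_def by simp
qed

lemma cycle_matrix_left_eigenvector_entry:
  fixes W :: "'a::comm_ring_1 mat"
  assumes W: "cycle_matrix N W" and v: "v \<in> carrier_mat 1 N" and eig: "v * W = \<mu> \<cdot>\<^sub>m v"
    and j: "j < N"
  shows "\<mu> * v $$ (0, j) = v $$ (0, Suc j mod N) * W $$ (Suc j mod N, j)"
proof -
  have W_carrier: "W \<in> carrier_mat N N" using W unfolding cycle_matrix_def by simp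
  have "\<mu> * v $$ (0, j) = (\<Sum>i<N. v $$ (0, i) * W $$ (i, j))"
    using arg_cong[OF eig, of "\<lambda>M. M $$ (0, j)"] index_mult_mat_sum[OF v W_carrier _ j] v j by simp
  also have "\<dots> = v $$ (0, Suc j mod N) * W $$ (Suc j mod N, j)"
    using j cycle_matrix_column(2)[OF W j] by (subst sum.remove[of _ "Suc j mod N"]) auto
  finally show ?thesis .
qed

lemma cycle_matrix_left_eigenvector_head_nonzero:
  fixes W :: "'a::field mat"
  assumes W: "cycle_matrix N W"
    and v: "v \<in> carrier_mat 1 N" "v \<noteq> 0\<^sub>m 1 N" and eig: "v * W = \<mu> \<cdot>\<^sub>m v"
  shows "v $$ (0, 0) \<noteq> 0"
proof
  assume head: "v $$ (0, 0) = 0"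
  note step = cycle_matrix_left_eigenvector_entry[OF W v(1) eig]
  note weight = cycle_matrix_column(1)[OF W]
  have "v $$ (0, j) = 0" if j: "j < N" for j
  proof (cases "\<mu> = 0")
    case True
    show ?thesis
    proof (cases j)
      case (Suc i)
      then show ?thesis using step[of i] weight[of i] True j by simp
    qed (use head in simp)
  next
    case False
    \<comment> \<open>Walk backwards around the cycle, starting from the vanishing entry \<open>v\<^sub>0\<close>.\<close>
    have "v $$ (0, N - Suc d) = 0" if "d < N" for d
      using that
    proof (induction d)
      case 0
      then show ?case using step[of "N - 1"] head False by simp
    next
      case (Suc d)
      then have "Suc (N - Suc (Suc d)) mod N = N - Suc d" by simp
      then show ?case using step[of "N - Suc (Suc d)"] weight Suc False by simp
    qed
    from this[of "N - Suc j"] show ?thesis using j by simp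
  qed
  then have "v = 0\<^sub>m 1 N" using v(1) by (intro eq_matI) auto
  then show False using v(2) by contradiction
qed

lemma cycle_matrix_cpx: "cycle_matrix N W \<Longrightarrow> 0 < N \<Longrightarrow> cycle_matrix N (cpx W)"
  unfolding cycle_matrix_def cpx_def by auto

section \<open>Sums of Kronecker products of row vectors\<close>

lemma sum_lessThan_mult_split:
  fixes f :: "nat \<Rightarrow> 'a::comm_monoid_add"
  shows "(\<Sum>i<N * n. f i) = (\<Sum>a<N. \<Sum>b<n. f (a * n + b))"
proof -
  have "(\<Sum>i<N * n. f i) = (\<Sum>a<N. sum f {a * n..<a * n + n})" using sum.nat_group[of f n N] by simp
  also have "\<dots> = (\<Sum>a<N. \<Sum>b<n. f (a * n + b))"
    by (simp add: sum.atLeastLessThan_shift_0 atLeast0LessThan)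
  finally show ?thesis .
qed

lemma block_index_less:
  assumes "a < N" "b < n"
  shows "a * n + b < N * (n::nat)"
proof -
  have "a * n + b < Suc a * n" using assms(2) by simp
  also have "\<dots> \<le> N * n" using assms(1) by (intro mult_le_mono1) simp
  finally show ?thesis .
qed

lemma row_block_eqI:
  assumes A: "A \<in> carrier_mat 1 (N * n)" and B: "B \<in> carrier_mat 1 (N * n)"
    and blocks: "\<And>a b. a < N \<Longrightarrow> b < n \<Longrightarrow> A $$ (0, a * n + b) = B $$ (0, a * n + b)"
  shows "A = B"
proof (rule eq_matI)
  fix i j assume "i < dim_row B" "j < dim_col B"
  then have i: "i = 0" and j: "j < N * n" using B by auto
  then have "0 < n" by (cases "n = 0") auto
  then have "j div n < N" "j mod n < n" using j by (auto simp: less_mult_imp_div_less)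
  then show "A $$ (i, j) = B $$ (i, j)" using blocks i by (metis div_mult_mod_eq)
qed (use A B in auto)

lemma kron_carrier: "P \<in> carrier_mat r c \<Longrightarrow> Q \<in> carrier_mat r' c' \<Longrightarrow> kron P Q \<in> carrier_mat (r * r') (c * c')"
  unfolding kron_def by simp

lemma index_kron:
  assumes "P \<in> carrier_mat r c" "Q \<in> carrier_mat r' c'" "i < r" "i' < r'" "j < c" "j' < c'"
  shows "kron P Q $$ (i * r' + i', j * c' + j') = P $$ (i, j) * Q $$ (i', j')"
  using assms block_index_less[of i r i' r'] block_index_less[of j c j' c'] by (simp add: kron_def)

text \<open>The row vector \<open>\<Sum>k\<in>K. v\<^sub>k \<otimes> \<xi>\<^sub>k\<close> in the form used by hypothesis (3).\<close>
definition kron_row_sum :: "nat \<Rightarrow> nat \<Rightarrow> (nat \<Rightarrow> 'a::comm_ring_1 mat) \<Rightarrow> (nat \<Rightarrow> 'a mat) \<Rightarrow> nat set \<Rightarrow> 'a mat"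
  where "kron_row_sum N n v \<xi> K = mat 1 (N * n) (\<lambda>(i, j). \<Sum>k\<in>K. kron (v k) (\<xi> k) $$ (0, j))"

lemma kron_row_sum_carrier[simp]: "kron_row_sum N n v \<xi> K \<in> carrier_mat 1 (N * n)"
  unfolding kron_row_sum_def by simp

lemma kron_row_sum_dim[simp]:
  "dim_row (kron_row_sum N n v \<xi> K) = 1" "dim_col (kron_row_sum N n v \<xi> K) = N * n"
  unfolding kron_row_sum_def by simp_all

lemma index_kron_row_sum:
  assumes v: "\<And>k. k \<in> K \<Longrightarrow> v k \<in> carrier_mat 1 N" and \<xi>: "\<And>k. k \<in> K \<Longrightarrow> \<xi> k \<in> carrier_mat 1 n"
    and a: "a < N" and b: "b < n"
  shows "kron_row_sum N n v \<xi> K $$ (0, a * n + b) = (\<Sum>k\<in>K. v k $$ (0, a) * \<xi> k $$ (0, b))"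
proof -
  have "kron (v k) (\<xi> k) $$ (0, a * n + b) = v k $$ (0, a) * \<xi> k $$ (0, b)" if "k \<in> K" for k
    using index_kron[OF v[OF that] \<xi>[OF that] _ _ a b, of 0 0] by simp
  then show ?thesis using block_index_less[OF a b] by (simp add: kron_row_sum_def)
qed

lemma index_row_mult_kron:
  assumes \<eta>: "\<eta> \<in> carrier_mat 1 (N * n)" and P: "P \<in> carrier_mat N N'" and Q: "Q \<in> carrier_mat n n'"
    and a': "a' < N'" and b': "b' < n'"
  shows "(\<eta> * kron P Q) $$ (0, a' * n' + b')
    = (\<Sum>a<N. \<Sum>b<n. \<eta> $$ (0, a * n + b) * (P $$ (a, a') * Q $$ (b, b')))"
proof -
  have PQ: "kron P Q \<in> carrier_mat (N * n) (N' * n')" using kron_carrier[OF P Q] .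
  have "(\<eta> * kron P Q) $$ (0, a' * n' + b') = (\<Sum>i<N * n. \<eta> $$ (0, i) * kron P Q $$ (i, a' * n' + b'))"
    using index_mult_mat_sum[OF \<eta> PQ _ block_index_less[OF a' b']] by simp
  also have "\<dots> = (\<Sum>a<N. \<Sum>b<n. \<eta> $$ (0, a * n + b) * kron P Q $$ (a * n + b, a' * n' + b'))"
    by (rule sum_lessThan_mult_split)
  also have "\<dots> = (\<Sum>a<N. \<Sum>b<n. \<eta> $$ (0, a * n + b) * (P $$ (a, a') * Q $$ (b, b')))"
    using index_kron[OF P Q _ _ a' b'] by (intro sum.cong refl) simp
  finally show ?thesis .
qed

lemma kron_row_sum_mult_kron:
  assumes v: "\<And>k. k \<in> K \<Longrightarrow> v k \<in> carrier_mat 1 N" and \<xi>: "\<And>k. k \<in> K \<Longrightarrow> \<xi> k \<in> carrier_mat 1 n"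
    and P: "P \<in> carrier_mat N N'" and Q: "Q \<in> carrier_mat n n'"
  shows "kron_row_sum N n v \<xi> K * kron P Q = kron_row_sum N' n' (\<lambda>k. v k * P) (\<lambda>k. \<xi> k * Q) K"
proof (rule row_block_eqI)
  have "kron P Q \<in> carrier_mat (N * n) (N' * n')" using kron_carrier[OF P Q] .
  then show "kron_row_sum N n v \<xi> K * kron P Q \<in> carrier_mat 1 (N' * n')"
    using kron_row_sum_carrier by (rule mult_carrier_mat[rotated])
  fix a' b' assume a': "a' < N'" and b': "b' < n'"
  have "(kron_row_sum N n v \<xi> K * kron P Q) $$ (0, a' * n' + b')
      = (\<Sum>a<N. \<Sum>b<n. (\<Sum>k\<in>K. v k $$ (0, a) * \<xi> k $$ (0, b)) * (P $$ (a, a') * Q $$ (b, b')))"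
    using index_row_mult_kron[OF kron_row_sum_carrier P Q a' b'] index_kron_row_sum[OF v \<xi>] by simp
  also have "\<dots> = (\<Sum>a<N. \<Sum>b<n. \<Sum>k\<in>K. (v k $$ (0, a) * P $$ (a, a')) * (\<xi> k $$ (0, b) * Q $$ (b, b')))"
    by (simp add: sum_distrib_left sum_distrib_right mult_ac)
  also have "\<dots> = (\<Sum>k\<in>K. \<Sum>a<N. \<Sum>b<n. (v k $$ (0, a) * P $$ (a, a')) * (\<xi> k $$ (0, b) * Q $$ (b, b')))"
    by (simp add: sum.swap[of _ K])
  also have "\<dots> = (\<Sum>k\<in>K. (v k * P) $$ (0, a') * (\<xi> k * Q) $$ (0, b'))"
    using v \<xi> P Q a' b'
    by (intro sum.cong refl) (simp add: index_mult_mat_sum[of _ 1 N _ N'] index_mult_mat_sum[of _ 1 n _ n']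
        sum_product)
  also have "\<dots> = kron_row_sum N' n' (\<lambda>k. v k * P) (\<lambda>k. \<xi> k * Q) K $$ (0, a' * n' + b')"
  proof -
    have "v k * P \<in> carrier_mat 1 N'" "\<xi> k * Q \<in> carrier_mat 1 n'" if "k \<in> K" for k
      using v[OF that] \<xi>[OF that] P Q by auto
    then show ?thesis using index_kron_row_sum[of K "\<lambda>k. v k * P" N' "\<lambda>k. \<xi> k * Q" n' a' b'] a' b' by simp
  qed
  finally show "(kron_row_sum N n v \<xi> K * kron P Q) $$ (0, a' * n' + b')
      = kron_row_sum N' n' (\<lambda>k. v k * P) (\<lambda>k. \<xi> k * Q) K $$ (0, a' * n' + b')" .
qed (rule kron_row_sum_carrier)

lemma kron_row_sum_add:
  assumes v: "\<And>k. k \<in> K \<Longrightarrow> v k \<in> carrier_mat 1 N"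
    and \<xi>: "\<And>k. k \<in> K \<Longrightarrow> \<xi> k \<in> carrier_mat 1 n" and \<zeta>: "\<And>k. k \<in> K \<Longrightarrow> \<zeta> k \<in> carrier_mat 1 n"
  shows "kron_row_sum N n v \<xi> K + kron_row_sum N n v \<zeta> K = kron_row_sum N n v (\<lambda>k. \<xi> k + \<zeta> k) K"
proof (rule row_block_eqI)
  fix a b assume a: "a < N" and b: "b < n"
  have \<xi>\<zeta>: "\<xi> k + \<zeta> k \<in> carrier_mat 1 n" if "k \<in> K" for k using \<xi>[OF that] \<zeta>[OF that] by simp
  have "(\<Sum>k\<in>K. v k $$ (0, a) * \<xi> k $$ (0, b)) + (\<Sum>k\<in>K. v k $$ (0, a) * \<zeta> k $$ (0, b))
      = (\<Sum>k\<in>K. v k $$ (0, a) * (\<xi> k + \<zeta> k) $$ (0, b))"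
  proof -
    have "(\<xi> k + \<zeta> k) $$ (0, b) = \<xi> k $$ (0, b) + \<zeta> k $$ (0, b)" if "k \<in> K" for k
      using \<xi>[OF that] \<zeta>[OF that] b by simp
    then show ?thesis unfolding sum.distrib[symmetric] by (intro sum.cong) (auto simp: distrib_left)
  qed
  then show "(kron_row_sum N n v \<xi> K + kron_row_sum N n v \<zeta> K) $$ (0, a * n + b)
      = kron_row_sum N n v (\<lambda>k. \<xi> k + \<zeta> k) K $$ (0, a * n + b)"
    using block_index_less[OF a b] index_kron_row_sum[of K v N \<xi> n a b, OF v \<xi> a b] index_kron_row_sum[of K v N \<zeta> n a b, OF v \<zeta> a b]
      index_kron_row_sum[of K v N "\<lambda>k. \<xi> k + \<zeta> k" n a b, OF v \<xi>\<zeta> a b] by simp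
qed (rule add_carrier_mat kron_row_sum_carrier)+

lemma kron_row_sum_smult_left:
  assumes v: "\<And>k. k \<in> K \<Longrightarrow> v k \<in> carrier_mat 1 N" and \<xi>: "\<And>k. k \<in> K \<Longrightarrow> \<xi> k \<in> carrier_mat 1 n"
  shows "kron_row_sum N n (\<lambda>k. c k \<cdot>\<^sub>m v k) \<xi> K = kron_row_sum N n v (\<lambda>k. c k \<cdot>\<^sub>m \<xi> k) K"
proof (rule row_block_eqI)
  fix a b assume a: "a < N" and b: "b < n"
  have cv: "c k \<cdot>\<^sub>m v k \<in> carrier_mat 1 N" and c\<xi>: "c k \<cdot>\<^sub>m \<xi> k \<in> carrier_mat 1 n" if "k \<in> K" for k
    using v[OF that] \<xi>[OF that] by simp_all
  have "(\<Sum>k\<in>K. (c k \<cdot>\<^sub>m v k) $$ (0, a) * \<xi> k $$ (0, b)) = (\<Sum>k\<in>K. v k $$ (0, a) * (c k \<cdot>\<^sub>m \<xi> k) $$ (0, b))"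
  proof -
    have "(c k \<cdot>\<^sub>m v k) $$ (0, a) = c k * v k $$ (0, a)" "(c k \<cdot>\<^sub>m \<xi> k) $$ (0, b) = c k * \<xi> k $$ (0, b)"
      if "k \<in> K" for k
      using v[OF that] \<xi>[OF that] a b by simp_all
    then show ?thesis by (intro sum.cong) auto
  qed
  then show "kron_row_sum N n (\<lambda>k. c k \<cdot>\<^sub>m v k) \<xi> K $$ (0, a * n + b)
      = kron_row_sum N n v (\<lambda>k. c k \<cdot>\<^sub>m \<xi> k) K $$ (0, a * n + b)"
    using index_kron_row_sum[of K "\<lambda>k. c k \<cdot>\<^sub>m v k" N \<xi> n a b, OF cv \<xi> a b]
      index_kron_row_sum[of K v N "\<lambda>k. c k \<cdot>\<^sub>m \<xi> k" n a b, OF v c\<xi> a b] by simp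
qed (rule kron_row_sum_carrier)+

lemma smult_kron_row_sum:
  assumes v: "\<And>k. k \<in> K \<Longrightarrow> v k \<in> carrier_mat 1 N" and \<xi>: "\<And>k. k \<in> K \<Longrightarrow> \<xi> k \<in> carrier_mat 1 n"
  shows "c \<cdot>\<^sub>m kron_row_sum N n v \<xi> K = kron_row_sum N n v (\<lambda>k. c \<cdot>\<^sub>m \<xi> k) K"
proof (rule row_block_eqI)
  fix a b assume a: "a < N" and b: "b < n"
  have c\<xi>: "c \<cdot>\<^sub>m \<xi> k \<in> carrier_mat 1 n" if "k \<in> K" for k using \<xi>[OF that] by simp
  have "c * (\<Sum>k\<in>K. v k $$ (0, a) * \<xi> k $$ (0, b)) = (\<Sum>k\<in>K. v k $$ (0, a) * (c \<cdot>\<^sub>m \<xi> k) $$ (0, b))"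
  proof -
    have "(c \<cdot>\<^sub>m \<xi> k) $$ (0, b) = c * \<xi> k $$ (0, b)" if "k \<in> K" for k using \<xi>[OF that] b by simp
    then show ?thesis unfolding sum_distrib_left by (intro sum.cong) auto
  qed
  then show "(c \<cdot>\<^sub>m kron_row_sum N n v \<xi> K) $$ (0, a * n + b)
      = kron_row_sum N n v (\<lambda>k. c \<cdot>\<^sub>m \<xi> k) K $$ (0, a * n + b)"
    using block_index_less[OF a b] index_kron_row_sum[of K v N \<xi> n a b, OF v \<xi> a b]
      index_kron_row_sum[of K v N "\<lambda>k. c \<cdot>\<^sub>m \<xi> k" n a b, OF v c\<xi> a b]
    by simp
qed (rule smult_carrier_mat kron_row_sum_carrier)+

lemma kron_row_sum_mono_neutral:
  assumes "finite K'" "K \<subseteq> K'" and zero: "\<And>k. k \<in> K' - K \<Longrightarrow> \<xi> k = 0\<^sub>m 1 n"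
    and v: "\<And>k. k \<in> K' \<Longrightarrow> v k \<in> carrier_mat 1 N" and \<xi>: "\<And>k. k \<in> K' \<Longrightarrow> \<xi> k \<in> carrier_mat 1 n"
  shows "kron_row_sum N n v \<xi> K' = kron_row_sum N n v \<xi> K"
proof (rule row_block_eqI)
  fix a b assume a: "a < N" and b: "b < n"
  have "(\<Sum>k\<in>K'. v k $$ (0, a) * \<xi> k $$ (0, b)) = (\<Sum>k\<in>K. v k $$ (0, a) * \<xi> k $$ (0, b))"
    using assms(1,2) zero b by (intro sum.mono_neutral_right) auto
  then show "kron_row_sum N n v \<xi> K' $$ (0, a * n + b) = kron_row_sum N n v \<xi> K $$ (0, a * n + b)"
    using index_kron_row_sum[of K' v N \<xi> n a b, OF v \<xi> a b] index_kron_row_sum[of K v N \<xi> n a b] v \<xi> assms(2) a b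
    by (simp add: subset_iff)
qed (rule kron_row_sum_carrier)+

lemma kron_row_sum_empty: "kron_row_sum N n v \<xi> {} = 0\<^sub>m 1 (N * n)"
  unfolding kron_row_sum_def by (rule eq_matI) auto

lemma kron_row_sum_cong:
  "(\<And>k. k \<in> K \<Longrightarrow> v k = v' k) \<Longrightarrow> (\<And>k. k \<in> K \<Longrightarrow> \<xi> k = \<xi>' k) \<Longrightarrow>
    kron_row_sum N n v \<xi> K = kron_row_sum N n v' \<xi>' K"
  unfolding kron_row_sum_def by (intro cong_mat refl) (auto intro!: sum.cong)

definition lin_indep_rows :: "nat \<Rightarrow> (nat \<Rightarrow> 'a::comm_ring_1 mat) \<Rightarrow> bool" where
  "lin_indep_rows N v \<longleftrightarrow> (\<forall>c. (\<forall>j<N. (\<Sum>k<N. c k * v k $$ (0, j)) = 0) \<longrightarrow> (\<forall>k<N. c k = 0))"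

lemma lin_indep_rows_nonzero:
  assumes indep: "lin_indep_rows N v" and k: "k < N"
  shows "v k \<noteq> 0\<^sub>m 1 N"
proof
  assume zero: "v k = 0\<^sub>m 1 N"
  define c where "c = (\<lambda>i. if i = k then 1 else 0 :: 'a)"
  have "\<forall>j<N. (\<Sum>i<N. c i * v i $$ (0, j)) = 0" using zero k by (simp add: c_def if_distrib sum.delta)
  then have "c k = 0" using indep k unfolding lin_indep_rows_def by blast
  then show False by (simp add: c_def)
qed

lemma kron_row_sum_eq_imp_eq:
  assumes indep: "lin_indep_rows N v" and v: "\<And>k. k < N \<Longrightarrow> v k \<in> carrier_mat 1 N"
    and \<xi>: "\<And>k. k < N \<Longrightarrow> \<xi> k \<in> carrier_mat 1 n" and \<zeta>: "\<And>k. k < N \<Longrightarrow> \<zeta> k \<in> carrier_mat 1 n"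
    and eq: "kron_row_sum N n v \<xi> {..<N} = kron_row_sum N n v \<zeta> {..<N}" and k: "k < N"
  shows "\<xi> k = \<zeta> k"
proof (rule eq_matI)
  fix i b assume "i < dim_row (\<zeta> k)" "b < dim_col (\<zeta> k)"
  then have i: "i = 0" and b: "b < n" using \<zeta>[OF k] by auto
  define c where "c = (\<lambda>k. \<xi> k $$ (0, b) - \<zeta> k $$ (0, b))"
  have "(\<Sum>k<N. c k * v k $$ (0, a)) = 0" if a: "a < N" for a
  proof -
    have "(\<Sum>k<N. v k $$ (0, a) * \<xi> k $$ (0, b)) = (\<Sum>k<N. v k $$ (0, a) * \<zeta> k $$ (0, b))"
      using arg_cong[OF eq, of "\<lambda>M. M $$ (0, a * n + b)"] a b v \<xi> \<zeta>
        index_kron_row_sum[of "{..<N}" v N \<xi> n a b] index_kron_row_sum[of "{..<N}" v N \<zeta> n a b]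
      by simp
    then show ?thesis by (simp add: c_def algebra_simps sum_subtractf)
  qed
  then have "c k = 0" using indep k unfolding lin_indep_rows_def by blast
  then show "\<xi> k $$ (i, b) = \<zeta> k $$ (i, b)" using i by (simp add: c_def)
qed (use \<xi>[OF k] \<zeta>[OF k] in auto)

lemma kron_row_sum_decomposition:
  fixes v :: "nat \<Rightarrow> 'a::field mat"
  assumes indep: "lin_indep_rows N v" and v: "\<And>k. k < N \<Longrightarrow> v k \<in> carrier_mat 1 N"
    and \<eta>: "\<eta> \<in> carrier_mat 1 (N * n)"
  obtains \<xi> where "\<And>k. \<xi> k \<in> carrier_mat 1 n" "\<eta> = kron_row_sum N n v \<xi> {..<N}"
proof -
  define V where "V = mat N N (\<lambda>(a, k). v k $$ (0, a))"
  have V: "V \<in> carrier_mat N N" unfolding V_def by simp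
  have "det V \<noteq> 0"
  proof
    assume "det V = 0"
    then obtain c where c: "c \<in> carrier_vec N" "c \<noteq> 0\<^sub>v N" "V *\<^sub>v c = 0\<^sub>v N"
      using det_0_iff_vec_prod_zero[OF V] by auto
    have "(\<Sum>k<N. c $ k * v k $$ (0, a)) = (V *\<^sub>v c) $ a" if "a < N" for a
      using index_mult_mat_vec_sum[OF V c(1) that] that by (simp add: V_def mult.commute)
    then have "\<forall>k<N. c $ k = 0" using indep c(3) unfolding lin_indep_rows_def by simp
    then show False using c(1,2) by (metis carrier_vecD eq_vecI index_zero_vec)
  qed
  then obtain Y where Y: "Y \<in> carrier_mat N N" "V * Y = 1\<^sub>m N"
    using det_nonzero_imp_right_inverse[OF V] by blast
  define \<xi> where "\<xi> = (\<lambda>k. mat 1 n (\<lambda>(_, b). \<Sum>a<N. Y $$ (k, a) * \<eta> $$ (0, a * n + b)))"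
  have \<xi>: "\<xi> k \<in> carrier_mat 1 n" for k unfolding \<xi>_def by simp
  have V_entry: "V $$ (a, k) = v k $$ (0, a)" if "a < N" "k < N" for a k using that by (simp add: V_def)
  have \<xi>_entry: "\<xi> k $$ (0, b) = (\<Sum>a'<N. Y $$ (k, a') * \<eta> $$ (0, a' * n + b))" if "b < n" for k b
    using that by (simp add: \<xi>_def)
  have "\<eta> = kron_row_sum N n v \<xi> {..<N}"
  proof (rule row_block_eqI[OF \<eta> kron_row_sum_carrier])
    fix a b assume a: "a < N" and b: "b < n"
    have "kron_row_sum N n v \<xi> {..<N} $$ (0, a * n + b) = (\<Sum>k<N. v k $$ (0, a) * \<xi> k $$ (0, b))"
    proof -
      have "v k \<in> carrier_mat 1 N" "\<xi> k \<in> carrier_mat 1 n" if "k \<in> {..<N}" for k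
        using v \<xi> that by simp_all
      from index_kron_row_sum[of "{..<N}" v N \<xi> n a b, OF this a b] show ?thesis by simp
    qed
    also have "\<dots> = (\<Sum>k<N. V $$ (a, k) * (\<Sum>a'<N. Y $$ (k, a') * \<eta> $$ (0, a' * n + b)))"
      by (rule sum.cong[OF refl]) (simp add: V_entry \<xi>_entry a b)
    also have "\<dots> = (\<Sum>k<N. \<Sum>a'<N. V $$ (a, k) * Y $$ (k, a') * \<eta> $$ (0, a' * n + b))"
      by (simp add: sum_distrib_left mult.assoc)
    also have "\<dots> = (\<Sum>a'<N. \<Sum>k<N. V $$ (a, k) * Y $$ (k, a') * \<eta> $$ (0, a' * n + b))"
      by (rule sum.swap)
    also have "\<dots> = (\<Sum>a'<N. (V * Y) $$ (a, a') * \<eta> $$ (0, a' * n + b))"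
      using index_mult_mat_sum[OF V Y(1) a] by (simp add: sum_distrib_right)
    also have "\<dots> = \<eta> $$ (0, a * n + b)"
      using Y(2) a by (simp add: sum.remove[of _ a] sum.neutral)
    finally show "\<eta> $$ (0, a * n + b) = kron_row_sum N n v \<xi> {..<N} $$ (0, a * n + b)" ..
  qed
  with \<xi> show ?thesis by (rule that)
qed

section \<open>Networked sampled-data systems\<close>

lemma kron_row_sum_singleton_input_eq_0:
  fixes D :: "'a::idom mat"
  assumes D: "D = mat N N (\<lambda>(i, j). if i = 0 \<and> j = 0 then 1 else 0)"
    and v: "v k \<in> carrier_mat 1 N" and \<xi>: "\<xi> k \<in> carrier_mat 1 n" and Bm: "Bm \<in> carrier_mat n p"
    and k: "k < N" and zero: "kron_row_sum N n v \<xi> {k} * kron D Bm = 0\<^sub>m 1 (N * p)"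
    and head: "v k $$ (0, 0) \<noteq> 0"
  shows "\<xi> k * Bm = 0\<^sub>m 1 p"
proof (rule eq_matI)
  fix i l assume "i < dim_row (0\<^sub>m 1 p :: 'a mat)" "l < dim_col (0\<^sub>m 1 p :: 'a mat)"
  then have i: "i = 0" and l: "l < p" by auto
  have D_carrier: "D \<in> carrier_mat N N" unfolding D by simp
  have vD: "(v k * D) $$ (0, 0) = v k $$ (0, 0)"
    using index_mult_mat_sum[OF v D_carrier, of 0 0] k by (simp add: D sum.remove[of _ 0])
  have "0 * p + l < N * p" using block_index_less[of 0 N l p] k l by simp
  then have "0 = (kron_row_sum N n v \<xi> {k} * kron D Bm) $$ (0, 0 * p + l)" using zero by simp
  also have "\<dots> = kron_row_sum N p (\<lambda>k. v k * D) (\<lambda>k. \<xi> k * Bm) {k} $$ (0, 0 * p + l)"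
    by (subst kron_row_sum_mult_kron[OF _ _ D_carrier Bm]) (use v \<xi> in auto)
  also have "\<dots> = v k $$ (0, 0) * (\<xi> k * Bm) $$ (0, l)"
  proof -
    have "v k' * D \<in> carrier_mat 1 N" "\<xi> k' * Bm \<in> carrier_mat 1 p" if "k' \<in> {k}" for k'
      using that v \<xi> D_carrier Bm by auto
    from index_kron_row_sum[of "{k}" "\<lambda>k. v k * D" N "\<lambda>k. \<xi> k * Bm" p 0 l, OF this _ l]
    show ?thesis using k vD by simp
  qed
  finally show "(\<xi> k * Bm) $$ (i, l) = 0\<^sub>m 1 p $$ (i, l)" using head i l by simp
qed (use \<xi> Bm in auto)

lemma network_left_eigenvector_decomposition:
  fixes W E0 Hm :: "'a::field mat"
  assumes W: "W \<in> carrier_mat N N" and E0: "E0 \<in> carrier_mat n n" and Hm: "Hm \<in> carrier_mat n n"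
    and v: "\<And>k. k < N \<Longrightarrow> v k \<in> carrier_mat 1 N" and v_eig: "\<And>k. k < N \<Longrightarrow> v k * W = \<mu> k \<cdot>\<^sub>m v k"
    and indep: "lin_indep_rows N v"
    and \<eta>: "\<eta> \<in> carrier_mat 1 (N * n)" and eig: "\<eta> * (kron (1\<^sub>m N) E0 + kron W Hm) = \<theta> \<cdot>\<^sub>m \<eta>"
  obtains \<xi> where "\<And>k. \<xi> k \<in> carrier_mat 1 n" "\<And>k. k < N \<Longrightarrow> \<xi> k * (E0 + \<mu> k \<cdot>\<^sub>m Hm) = \<theta> \<cdot>\<^sub>m \<xi> k"
    "\<eta> = kron_row_sum N n v \<xi> {..<N}"
proof -
  obtain \<xi> where \<xi>: "\<And>k. \<xi> k \<in> carrier_mat 1 n" and \<eta>_eq: "\<eta> = kron_row_sum N n v \<xi> {..<N}"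
    using kron_row_sum_decomposition[OF indep v \<eta>] by metis
  have vK: "\<And>k. k \<in> {..<N} \<Longrightarrow> v k \<in> carrier_mat 1 N" and \<xi>K: "\<And>k. k \<in> {..<N} \<Longrightarrow> \<xi> k \<in> carrier_mat 1 n"
    using v \<xi> by simp_all
  define E where "E = (\<lambda>k. \<xi> k * E0 + \<mu> k \<cdot>\<^sub>m (\<xi> k * Hm))"
  have identity_part: "\<eta> * kron (1\<^sub>m N) E0 = kron_row_sum N n v (\<lambda>k. \<xi> k * E0) {..<N}"
  proof -
    have "\<eta> * kron (1\<^sub>m N) E0 = kron_row_sum N n (\<lambda>k. v k * 1\<^sub>m N) (\<lambda>k. \<xi> k * E0) {..<N}"
      unfolding \<eta>_eq by (rule kron_row_sum_mult_kron[OF vK \<xi>K one_carrier_mat E0])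
    also have "\<dots> = kron_row_sum N n v (\<lambda>k. \<xi> k * E0) {..<N}"
      by (intro kron_row_sum_cong) (simp_all add: right_mult_one_mat[OF v])
    finally show ?thesis .
  qed
  have coupling_part: "\<eta> * kron W Hm = kron_row_sum N n v (\<lambda>k. \<mu> k \<cdot>\<^sub>m (\<xi> k * Hm)) {..<N}"
  proof -
    have "\<eta> * kron W Hm = kron_row_sum N n (\<lambda>k. v k * W) (\<lambda>k. \<xi> k * Hm) {..<N}"
      unfolding \<eta>_eq by (rule kron_row_sum_mult_kron[OF vK \<xi>K W Hm])
    also have "\<dots> = kron_row_sum N n (\<lambda>k. \<mu> k \<cdot>\<^sub>m v k) (\<lambda>k. \<xi> k * Hm) {..<N}"
      using v_eig by (intro kron_row_sum_cong) auto
    also have "\<dots> = kron_row_sum N n v (\<lambda>k. \<mu> k \<cdot>\<^sub>m (\<xi> k * Hm)) {..<N}"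
      by (rule kron_row_sum_smult_left) (use v \<xi> Hm in \<open>auto intro: mult_carrier_mat\<close>)
    finally show ?thesis .
  qed
  have "kron_row_sum N n v E {..<N} = \<eta> * (kron (1\<^sub>m N) E0 + kron W Hm)"
  proof -
    have "\<eta> * (kron (1\<^sub>m N) E0 + kron W Hm) = \<eta> * kron (1\<^sub>m N) E0 + \<eta> * kron W Hm"
      using mult_add_distrib_mat[OF \<eta> kron_carrier[OF one_carrier_mat E0] kron_carrier[OF W Hm]] .
    also have "\<dots> = kron_row_sum N n v E {..<N}"
      unfolding identity_part coupling_part E_def by (rule kron_row_sum_add) (use v \<xi> E0 Hm in \<open>auto intro: mult_carrier_mat smult_carrier_mat\<close>)
    finally show ?thesis by simp
  qed
  also have "\<dots> = \<theta> \<cdot>\<^sub>m \<eta>" by (rule eig)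
  also have "\<dots> = kron_row_sum N n v (\<lambda>k. \<theta> \<cdot>\<^sub>m \<xi> k) {..<N}"
    unfolding \<eta>_eq by (rule smult_kron_row_sum[OF vK \<xi>K])
  finally have E_sum_eq: "kron_row_sum N n v E {..<N} = kron_row_sum N n v (\<lambda>k. \<theta> \<cdot>\<^sub>m \<xi> k) {..<N}" .
  have E_carrier: "E k \<in> carrier_mat 1 n" for k
    unfolding E_def using \<xi>[of k] E0 Hm by (meson add_carrier_mat mult_carrier_mat smult_carrier_mat)
  have E_eq: "E k = \<theta> \<cdot>\<^sub>m \<xi> k" if "k < N" for k
    by (rule kron_row_sum_eq_imp_eq[OF indep v _ _ E_sum_eq that]) (use E_carrier \<xi> in auto)
  have "\<xi> k * (E0 + \<mu> k \<cdot>\<^sub>m Hm) = \<theta> \<cdot>\<^sub>m \<xi> k" if "k < N" for k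
    using E_eq[OF that] mult_add_distrib_mat[OF \<xi> E0 smult_carrier_mat[OF Hm]] mult_smult_distrib[OF \<xi> Hm]
    unfolding E_def by simp
  with \<xi> show ?thesis using \<eta>_eq by (rule that)
qed

lemma cycle_network_PBH:
  fixes W E0 Hm Bm D :: "complex mat"
  assumes W: "cycle_matrix N W" and E0: "E0 \<in> carrier_mat n n" and Hm: "Hm \<in> carrier_mat n n"
    and Bm: "Bm \<in> carrier_mat n p"
    and D: "D = mat N N (\<lambda>(i, j). if i = 0 \<and> j = 0 then 1 else 0)"
    and v: "\<And>k. k < N \<Longrightarrow> v k \<in> carrier_mat 1 N" and v_eig: "\<And>k. k < N \<Longrightarrow> v k * W = \<mu> k \<cdot>\<^sub>m v k"
    and indep: "lin_indep_rows N v"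
    and ctrb: "\<And>k. k < N \<Longrightarrow> controllable_pair (E0 + \<mu> k \<cdot>\<^sub>m Hm) Bm"
    and common: "\<forall>K \<theta> \<xi>. K \<subseteq> {..<N} \<and> 1 < card K \<and>
                  (\<forall>k\<in>K. eigenvalue (E0 + \<mu> k \<cdot>\<^sub>m Hm) \<theta>) \<and>
                  (\<forall>k\<in>K. \<xi> k \<in> left_eigenspace \<theta> (E0 + \<mu> k \<cdot>\<^sub>m Hm)) \<and>
                  (\<exists>k\<in>K. \<xi> k \<noteq> 0\<^sub>m 1 n)
                  \<longrightarrow> kron_row_sum N n v \<xi> K * kron D Bm \<noteq> 0\<^sub>m 1 (N * p)"
    and \<eta>: "\<eta> \<in> carrier_mat 1 (N * n)"
    and eig: "\<eta> * (kron (1\<^sub>m N) E0 + kron W Hm) = \<theta> \<cdot>\<^sub>m \<eta>"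
    and annihilates: "\<eta> * kron D Bm = 0\<^sub>m 1 (N * p)"
  shows "\<eta> = 0\<^sub>m 1 (N * n)"
proof -
  have W_carrier: "W \<in> carrier_mat N N" using W unfolding cycle_matrix_def by simp
  have E: "E0 + \<mu> k \<cdot>\<^sub>m Hm \<in> carrier_mat n n" for k using E0 Hm by simp
  obtain \<xi> where \<xi>: "\<And>k. \<xi> k \<in> carrier_mat 1 n"
    and \<xi>_eig: "\<And>k. k < N \<Longrightarrow> \<xi> k * (E0 + \<mu> k \<cdot>\<^sub>m Hm) = \<theta> \<cdot>\<^sub>m \<xi> k"
    and \<eta>_eq: "\<eta> = kron_row_sum N n v \<xi> {..<N}"
    using network_left_eigenvector_decomposition[OF W_carrier E0 Hm v v_eig indep \<eta> eig] by metis
  define K where "K = {k. k < N \<and> \<xi> k \<noteq> 0\<^sub>m 1 n}"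
  have K: "K \<subseteq> {..<N}" "finite K" unfolding K_def by auto
  have \<eta>_K: "\<eta> = kron_row_sum N n v \<xi> K"
    unfolding \<eta>_eq by (rule kron_row_sum_mono_neutral) (use K v \<xi> in \<open>auto simp: K_def\<close>)
  consider "K = {}" | k where "K = {k}" | "1 < card K"
    using K(2) by (metis card_0_eq card_1_singletonE less_one linorder_neqE_nat)
  then show ?thesis
  proof cases
    case 1
    then show ?thesis using \<eta>_K by (simp add: kron_row_sum_empty)
  next
    case (2 k)
    then have k: "k < N" "\<xi> k \<noteq> 0\<^sub>m 1 n" unfolding K_def by auto
    \<comment> \<open>Only the first node is actuated, and \<open>v\<^sub>k\<close> has a nonzero first entry on the cycle.\<close>
    have "v k $$ (0, 0) \<noteq> 0"
      using cycle_matrix_left_eigenvector_head_nonzero[OF W v[OF k(1)] lin_indep_rows_nonzero[OF indep k(1)]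
          v_eig[OF k(1)]] .
    then have "\<xi> k * Bm = 0\<^sub>m 1 p"
      using kron_row_sum_singleton_input_eq_0[where v = v and \<xi> = \<xi> and k = k, OF D v[OF k(1)] \<xi> Bm k(1)] annihilates[unfolded \<eta>_K 2] by blast
    then have "\<xi> k = 0\<^sub>m 1 n"
      using controllable_pair_left_eigenvector_zero[OF E Bm ctrb[OF k(1)] \<xi> \<xi>_eig[OF k(1)]] by blast
    then show ?thesis using k(2) by contradiction
  next
    case 3
    have eigenvectors: "\<forall>k\<in>K. \<xi> k \<in> left_eigenspace \<theta> (E0 + \<mu> k \<cdot>\<^sub>m Hm)"
      using \<xi> \<xi>_eig K(1) E0 Hm unfolding left_eigenspace_def by auto
    have eigenvalues: "\<forall>k\<in>K. eigenvalue (E0 + \<mu> k \<cdot>\<^sub>m Hm) \<theta>"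
      using left_eigenvector_imp_eigenvalue[OF E \<xi>] \<xi>_eig unfolding K_def by blast
    have "K \<noteq> {}" using 3 by auto
    then have "\<exists>k\<in>K. \<xi> k \<noteq> 0\<^sub>m 1 n" unfolding K_def by auto
    then have "kron_row_sum N n v \<xi> K * kron D Bm \<noteq> 0\<^sub>m 1 (N * p)"
      using common K(1) 3 eigenvectors eigenvalues by blast
    then show ?thesis using annihilates \<eta>_K by simp
  qed
qed

theorem cycle_network_dt_controllable:
  fixes W E0 Hm Bm Dl :: "real mat" and v :: "nat \<Rightarrow> complex mat"
  assumes W: "cycle_matrix N W" and N: "0 < N"
    and E0: "E0 \<in> carrier_mat n n" and Hm: "Hm \<in> carrier_mat n n" and Bm: "Bm \<in> carrier_mat n p"
    and Dl: "Dl = mat N N (\<lambda>(i, j). if i = 0 \<and> j = 0 then 1 else 0)"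
    and v: "\<And>k. k < N \<Longrightarrow> v k \<in> carrier_mat 1 N" and v_eig: "\<And>k. k < N \<Longrightarrow> v k * cpx W = \<mu> k \<cdot>\<^sub>m v k"
    and indep: "lin_indep_rows N v"
    and ctrb: "\<And>k. k < N \<Longrightarrow> controllable_pair (cpx E0 + \<mu> k \<cdot>\<^sub>m cpx Hm) (cpx Bm)"
    and common: "\<forall>K \<theta> \<xi>. K \<subseteq> {..<N} \<and> 1 < card K \<and>
                  (\<forall>k\<in>K. eigenvalue (cpx E0 + \<mu> k \<cdot>\<^sub>m cpx Hm) \<theta>) \<and>
                  (\<forall>k\<in>K. \<xi> k \<in> left_eigenspace \<theta> (cpx E0 + \<mu> k \<cdot>\<^sub>m cpx Hm)) \<and>
                  (\<exists>k\<in>K. \<xi> k \<noteq> 0\<^sub>m 1 n)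
                  \<longrightarrow> kron_row_sum N n v \<xi> K * cpx (kron Dl Bm) \<noteq> 0\<^sub>m 1 (N * p)"
  shows "dt_controllable (kron (1\<^sub>m N) E0 + kron W Hm) (kron Dl Bm)"
proof (rule dt_controllable_if_PBH)
  have W_carrier: "W \<in> carrier_mat N N" using W unfolding cycle_matrix_def by simp
  have identity: "kron (1\<^sub>m N) E0 \<in> carrier_mat (N * n) (N * n)" using kron_carrier[OF one_carrier_mat E0] .
  have coupling: "kron W Hm \<in> carrier_mat (N * n) (N * n)" using kron_carrier[OF W_carrier Hm] .
  show "kron (1\<^sub>m N) E0 + kron W Hm \<in> carrier_mat (N * n) (N * n)" using identity coupling by simp
  show "kron Dl Bm \<in> carrier_mat (N * n) (N * p)" using kron_carrier[OF _ Bm, of Dl N N] Dl by simp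
  fix \<theta> \<eta> assume \<eta>: "\<eta> \<in> carrier_mat 1 (N * n)"
    and eig: "\<eta> * cpx (kron (1\<^sub>m N) E0 + kron W Hm) = \<theta> \<cdot>\<^sub>m \<eta>"
    and annihilates: "\<eta> * cpx (kron Dl Bm) = 0\<^sub>m 1 (N * p)"
  have "cpx Dl = mat N N (\<lambda>(i, j). if i = 0 \<and> j = 0 then 1 else 0)"
    unfolding Dl cpx_def by (rule eq_matI) auto
  moreover have "\<eta> * (kron (1\<^sub>m N) (cpx E0) + kron (cpx W) (cpx Hm)) = \<theta> \<cdot>\<^sub>m \<eta>"
    using eig by (simp add: cpx_add[OF identity coupling] cpx_kron cpx_one)
  ultimately show "\<eta> = 0\<^sub>m 1 (N * n)"
    using cycle_network_PBH[OF cycle_matrix_cpx[OF W N] cpx_carrier[OF E0] cpx_carrier[OF Hm] cpx_carrier[OF Bm] _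
        v v_eig indep ctrb _ \<eta>] common annihilates
    by (simp add: cpx_kron)
qed

theorem corollary7:
  fixes N n m p :: nat and A B C H W Dl :: "real mat" and h :: real
    and v :: "nat \<Rightarrow> complex mat" and lam :: "nat \<Rightarrow> complex"
  assumes N: "N \<ge> 2" and pos: "n > 0" "m > 0" "p > 0"
    and A: "A \<in> carrier_mat n n" and B: "B \<in> carrier_mat n p"
    and C: "C \<in> carrier_mat m n" and H: "H \<in> carrier_mat n m"
    and h: "h > 0"
    and W: "W \<in> carrier_mat N N"
    and W1N: "W $$ (0, N - 1) \<noteq> 0"
    and Wsub: "\<forall>i. 1 \<le> i \<and> i < N \<longrightarrow> W $$ (i, i - 1) \<noteq> 0"
    and Wzero: "\<forall>i<N. \<forall>j<N. \<not> (i = 0 \<and> j = N - 1) \<and> \<not> (1 \<le> i \<and> j = i - 1) \<longrightarrow> W $$ (i, j) = 0"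
    and Delta: "Dl = mat N N (\<lambda>(i,j). if i = 0 \<and> j = 0 then 1 else 0)"
    and v_dim: "\<forall>k<N. v k \<in> carrier_mat 1 N"
    and v_eig: "\<forall>k<N. v k * cpx W = lam k \<cdot>\<^sub>m v k"
    and v_indep: "\<forall>c :: nat \<Rightarrow> complex.
                    (\<forall>j<N. (\<Sum>k<N. c k * v k $$ (0, j)) = 0) \<longrightarrow> (\<forall>k<N. c k = 0)"
    and ctrl: "\<forall>k<N. controllable_pair
                 (cpx (mexp A h) + lam k \<cdot>\<^sub>m cpx (mexp_int A h * H * C))
                 (cpx (mexp_int A h * B))"
    and common: "\<forall>K \<theta> \<xi>. K \<subseteq> {..<N} \<and> 1 < card K \<and>
                  (\<forall>k\<in>K. eigenvalue (cpx (mexp A h) + lam k \<cdot>\<^sub>m cpx (mexp_int A h * H * C)) \<theta>) \<and>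
                  (\<forall>k\<in>K. \<xi> k \<in> left_eigenspace \<theta>
                           (cpx (mexp A h) + lam k \<cdot>\<^sub>m cpx (mexp_int A h * H * C))) \<and>
                  (\<exists>k\<in>K. \<xi> k \<noteq> 0\<^sub>m 1 n)
                  \<longrightarrow> mat 1 (N * n) (\<lambda>(i,j). \<Sum>k\<in>K. kron (v k) (\<xi> k) $$ (0, j))
                        * cpx (kron Dl (mexp_int A h * B)) \<noteq> 0\<^sub>m 1 (N * p)"
  shows "dt_controllable (kron (1\<^sub>m N) (mexp A h) + kron W (mexp_int A h * H * C))
                         (kron Dl (mexp_int A h * B))"
proof (rule cycle_network_dt_controllable)
  show "cycle_matrix N W" unfolding cycle_matrix_def using W W1N Wsub Wzero by blast
  have "mexp_int A h \<in> carrier_mat n n" using A by (simp add: mexp_int_def)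
  then show "mexp_int A h * H * C \<in> carrier_mat n n" "mexp_int A h * B \<in> carrier_mat n p"
    using H C B by auto
  show "mexp A h \<in> carrier_mat n n" using A by (simp add: mexp_def)
  show "lin_indep_rows N v" unfolding lin_indep_rows_def using v_indep .
qed (use N Delta v_dim v_eig ctrl common in \<open>simp_all add: kron_row_sum_def\<close>)

end
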